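(* Let $G=\mathbb{Z}/p^r\mathbb{Z}$ be a cyclic $p$-group of $p$-rank $r$. The prime ideals of the Burnside Tambara functor $\Omega_G$ are exactly the following. (i) For each prime integer $q\neq p$, the prime ideals over $(q)\subseteq R_0$ are exactly the $r+1$ ideals $$\mathcal{S}^r(q)\subsetneq \mathcal{L}\mathcal{S}^{r-1}(q)\subsetneq\cdots\subsetneq\mathcal{L}^{r}(q).$$ (ii) Over $(p)\subseteq R_0$ there is exactly one prime ideal, namely $\mathcal{L}^r(p)$. (iii) Over $0\subseteq R_0$ there are exactly the $r+1$ prime ideals $$0\subsetneq \mathcal{L}(0)\subsetneq\cdots\subsetneq\mathcal{L}^r(0).$$ Hence $$\mathit{Spec}\,\Omega_G=\{\mathcal{L}^r(p)\}\cup\{\mathcal{L}^i(0)\mid 0\le i\le r\}\cup\{\mathcal{L}^i\mathcal{S}^{r-i}(q)\mid 0\le i\le r,\ q\text{ a prime different from }p\}.$$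
   Context: Fix a prime $p$ and an integer $r\ge0$. For $0\le k\le r$ let $R_k$ be the commutative ring which is free as a $\mathbb{Z}$-module with basis $X_{k,0},\dots,X_{k,k}$ and multiplication $X_{k,i}X_{k,j}=p^{k-\max(i,j)}X_{k,\min(i,j)}$; thus $X_{k,k}=1$, and an integer $n$ is identified with $nX_{k,k}$. For $0\le k\le\ell\le r$ define: the additive map $\mathrm{ind}^\ell_k:R_k\to R_\ell$, $X_{k,i}\mapsto X_{\ell,i}$; the ring homomorphism $\mathrm{res}^\ell_k:R_\ell\to R_k$, $\mathrm{res}^\ell_k(X_{\ell,i})=p^{\ell-k}X_{k,i}$ if $i\le k$ and $=p^{\ell-i}$ if $i\ge k$; and the multiplicative map $\mathrm{jnd}^\ell_k:R_k\to R_\ell$, $$\mathrm{jnd}^\ell_k\Big(\sum_{i=0}^k m_iX_{k,i}\Big)=m_kX_{\ell,\ell}+\sum_{k\le i<\ell}\frac{m_k^{p^{\ell-i}}-m_k^{p^{\ell-i-1}}}{p^{\ell-i}}X_{\ell,i}+\sum_{0\le i<k}\frac{(\sum_{s=i}^k m_sp^{k-s})^{p^{\ell-k}}-(\sum_{s=i+1}^k m_sp^{k-s})^{p^{\ell-k}}}{p^{\ell-i}}X_{\ell,i}$$ ($m_i\in\mathbb{Z}$; all coefficients are integers). For $k=\ell$ these maps are the identity. These data are the Burnside Tambara functor $\Omega_G$ on $G=\mathbb{Z}/p^r\mathbb{Z}$ ($R_k=\Omega_G(G/H_k)$, $H_k$ the subgroup of order $p^k$); keeping only indices $\le n$ gives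 $\Omega_{H_n}$ for $0\le n\le r$. An ideal of $\Omega_{H_n}$ is a sequence $[I_0,\dots,I_n]$ of ideals $I_k\subseteq R_k$ such that for every $1\le k\le n$: $\mathrm{ind}^k_{k-1}(I_{k-1})\subseteq I_k$, $\mathrm{res}^k_{k-1}(I_k)\subseteq I_{k-1}$, $\mathrm{jnd}^k_{k-1}(I_{k-1})\subseteq I_k$. Inclusion of ideals is componentwise. The ideal is over an ideal $J\subseteq R_0$ if $I_0=J$. It is proper if $I_0\ne R_0$ (equivalently $I_k\neq R_k$ for all $k$). A proper ideal $[I_0,\dots,I_n]$ is prime if for all $0\le\ell\le k\le n$, $a\in R_k$, $b\in R_\ell$: whenever $(\mathrm{jnd}^m_i\mathrm{res}^k_i(a))\cdot(\mathrm{jnd}^m_j\mathrm{res}^\ell_j(b))\in I_m$ for all $0\le i\le k$, $0\le j\le\ell$ with $m=\max(i,j)$, then $a\in I_k$ or $b\in I_\ell$. (This is the specialization of the general notion of prime ideal of a Tambara functor.) $\mathit{Spec}\,\Omega_G$ is the set of prime ideals of $\Omega_G=\Omega_{H_r}$. Operators: for $1\le k\le r$ and an ideal $I\subseteq R_{k-1}$, $L(I)=L_k(I)=(\mathrm{res}^k_{k-1})^{-1}(I)\subseteq R_k$ and $S(I)=S_k(I)$ is the ideal of $R_k$ generated by $\mathrm{ind}^k_{k-1}(I)\cup\mathrm{jnd}^k_{k-1}(I)$. For an ideal $\mathscr I=[I_0,\dots,I_{k-1}]$ of $\Omega_{H_{k-1}}$, $\mathcal{L}\mathscr I=[I_0,\dots,I_{k-1},L(I_{k-1})]$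 and $\mathcal{S}\mathscr I=[I_0,\dots,I_{k-1},S(I_{k-1})]$, ideals of $\Omega_{H_k}$; $\mathcal L^n,\mathcal S^n$ denote iterates. For $x\in\mathbb{Z}$, $(x)$ denotes the ideal $[x\mathbb{Z}]$ of $\Omega_{H_0}$ (so e.g. $\mathcal L^i\mathcal S^{r-i}(q)$ is an ideal of $\Omega_{H_r}$), and $\mathcal{L}^i(0)$ denotes $\mathcal L$ applied $i$ times to the zero ideal $[0,\dots,0]$ of $\Omega_{H_{r-i}}$. *)

theory Defs
  imports "HOL-Computational_Algebra.Primes"
begin

text \<open>Elements of R_k are integer coefficient vectors x :: nat => int with respect to the
basis X_{k,0},...,X_{k,k}; the coefficient of X_{k,i} is x i, and x i = 0 for i > k.\<close>

type_synonym elt = "nat \<Rightarrow> int"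

definition carrierR :: "nat \<Rightarrow> elt set" where
  "carrierR k = {x. \<forall>i>k. x i = 0}"

text \<open>Multiplication of R_k: X_{k,i} X_{k,j} = p^(k - max i j) X_{k, min i j}.\<close>
definition mulR :: "nat \<Rightarrow> nat \<Rightarrow> elt \<Rightarrow> elt \<Rightarrow> elt" where
  "mulR p k x y = (\<lambda>m. if m \<le> k then
      (\<Sum>i\<le>k. \<Sum>j\<le>k. if min i j = m then x i * y j * int p ^ (k - max i j) else 0)
    else 0)"

definition zeroR :: elt where "zeroR = (\<lambda>_. 0)"

definition addR :: "elt \<Rightarrow> elt \<Rightarrow> elt" where "addR x y = (\<lambda>m. x m + y m)"

definition negR :: "elt \<Rightarrow> elt" where "negR x = (\<lambda>m. - x m)"

definition is_ideal_R :: "nat \<Rightarrow> nat \<Rightarrow> elt set \<Rightarrow> bool" where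
  "is_ideal_R p k I \<longleftrightarrow> I \<subseteq> carrierR k \<and> zeroR \<in> I
     \<and> (\<forall>x\<in>I. \<forall>y\<in>I. addR x y \<in> I) \<and> (\<forall>x\<in>I. negR x \<in> I)
     \<and> (\<forall>a\<in>carrierR k. \<forall>x\<in>I. mulR p k a x \<in> I)"

text \<open>ind^l_k : X_{k,i} |-> X_{l,i} (coefficient vectors unchanged).\<close>
definition indR :: "nat \<Rightarrow> nat \<Rightarrow> elt \<Rightarrow> elt" where
  "indR k l x = x"

text \<open>res^l_k, extended additively from res(X_{l,i}) = p^(l-k) X_{k,i} (i <= k),
  = p^(l-i) (i >= k).\<close>
definition resR :: "nat \<Rightarrow> nat \<Rightarrow> nat \<Rightarrow> elt \<Rightarrow> elt" where
  "resR p l k x = (\<lambda>m. if m < k then int p ^ (l - k) * x m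
      else if m = k then (\<Sum>i\<in>{k..l}. int p ^ (l - i) * x i) else 0)"

text \<open>jnd^l_k (the norm map), by the explicit formula; the divisions are exact.\<close>
definition jndR :: "nat \<Rightarrow> nat \<Rightarrow> nat \<Rightarrow> elt \<Rightarrow> elt" where
  "jndR p k l x = (\<lambda>i.
     if i = l then x k
     else if k \<le> i \<and> i < l then
       (x k ^ (p ^ (l - i)) - x k ^ (p ^ (l - i - 1))) div (int p ^ (l - i))
     else if i < k then
       ((\<Sum>s\<in>{i..k}. x s * int p ^ (k - s)) ^ (p ^ (l - k))
         - (\<Sum>s\<in>{Suc i..k}. x s * int p ^ (k - s)) ^ (p ^ (l - k))) div (int p ^ (l - i))
     else 0)"

text \<open>Ideals of Omega_{H_n}: lists [I_0, ..., I_n].\<close>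
definition is_TF_ideal :: "nat \<Rightarrow> nat \<Rightarrow> elt set list \<Rightarrow> bool" where
  "is_TF_ideal p n Is \<longleftrightarrow> length Is = Suc n
     \<and> (\<forall>k\<le>n. is_ideal_R p k (Is ! k))
     \<and> (\<forall>k\<in>{1..n}. indR (k - 1) k ` (Is ! (k - 1)) \<subseteq> Is ! k
                  \<and> resR p k (k - 1) ` (Is ! k) \<subseteq> Is ! (k - 1)
                  \<and> jndR p (k - 1) k ` (Is ! (k - 1)) \<subseteq> Is ! k)"

definition is_prime_TF :: "nat \<Rightarrow> nat \<Rightarrow> elt set list \<Rightarrow> bool" where
  "is_prime_TF p n Is \<longleftrightarrow> is_TF_ideal p n Is \<and> Is ! 0 \<noteq> carrierR 0
     \<and> (\<forall>k l a b. l \<le> k \<longrightarrow> k \<le> n \<longrightarrow> a \<in> carrierR k \<longrightarrow> b \<in> carrierR l \<longrightarrow>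
          (\<forall>i\<le>k. \<forall>j\<le>l.
             mulR p (max i j) (jndR p i (max i j) (resR p k i a))
                              (jndR p j (max i j) (resR p l j b)) \<in> Is ! max i j)
          \<longrightarrow> a \<in> Is ! k \<or> b \<in> Is ! l)"

definition SpecOmega :: "nat \<Rightarrow> nat \<Rightarrow> elt set list set" where
  "SpecOmega p r = {P. is_prime_TF p r P}"

definition ideal_le :: "elt set list \<Rightarrow> elt set list \<Rightarrow> bool" where
  "ideal_le A B \<longleftrightarrow> length A = length B \<and> (\<forall>k<length A. A ! k \<subseteq> B ! k)"

definition ideal_less :: "elt set list \<Rightarrow> elt set list \<Rightarrow> bool" where
  "ideal_less A B \<longleftrightarrow> ideal_le A B \<and> A \<noteq> B"

definition gen_ideal :: "nat \<Rightarrow> nat \<Rightarrow> elt set \<Rightarrow> elt set" where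
  "gen_ideal p k A = \<Inter>{J. is_ideal_R p k J \<and> A \<subseteq> J}"

definition opL :: "nat \<Rightarrow> nat \<Rightarrow> elt set \<Rightarrow> elt set" where
  "opL p k I = {x \<in> carrierR k. resR p k (k - 1) x \<in> I}"

definition opS :: "nat \<Rightarrow> nat \<Rightarrow> elt set \<Rightarrow> elt set" where
  "opS p k I = gen_ideal p k (indR (k - 1) k ` I \<union> jndR p (k - 1) k ` I)"

text \<open>calL, calS : ideals of Omega_{H_(k-1)} to ideals of Omega_{H_k}, where k = length Is.\<close>
definition calL :: "nat \<Rightarrow> elt set list \<Rightarrow> elt set list" where
  "calL p Is = Is @ [opL p (length Is) (last Is)]"

definition calS :: "nat \<Rightarrow> elt set list \<Rightarrow> elt set list" where
  "calS p Is = Is @ [opS p (length Is) (last Is)]"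

definition princ :: "int \<Rightarrow> elt set list" where
  "princ x = [{y \<in> carrierR 0. x dvd y 0}]"

definition zeroTF :: "nat \<Rightarrow> elt set list" where
  "zeroTF n = replicate (Suc n) {zeroR}"

end

theory Submission
  imports Defs "HOL-Number_Theory.Number_Theory"
begin

text \<open>Each \<open>R\<^sub>k\<close> embeds into \<open>\<int>\<^sup>k\<^sup>+\<^sup>1\<close> through its marks
  \<open>\<phi>\<^sub>t(x) = \<Sum>\<^sub>s\<^sub>\<ge>\<^sub>t x\<^sub>s p\<^sup>k\<^sup>-\<^sup>s\<close> (\<open>t \<le> k\<close>), which are ring homomorphisms.
  In marks, restriction forgets the top coordinates, induction multiplies by \<open>p\<close>, and the norm raises
  the marks to \<open>p\<close>-power powers (the coefficients of the norm are integral by the lifting-the-exponent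
  congruence \<open>p\<^sup>e | a - b \<Longrightarrow> p\<^sup>e\<^sup>+\<^sup>1 | a\<^sup>p - b\<^sup>p\<close>). Hence for \<open>q = 0\<close> or a prime and any level \<open>c\<close>,
  the sets \<open>T(q,c)\<^sub>m = {x. q | \<phi>\<^sub>t(x) for t \<le> min m c}\<close> form a prime ideal \<open>T(q,c)\<close>; it is
  \<open>\<L>\<^sup>n\<^sup>-\<^sup>c \<S>\<^sup>c (q)\<close> for \<open>q \<noteq> p\<close>, and for \<open>q = p\<close> the level is irrelevant because all marks are congruent
  modulo \<open>p\<close>.

  Conversely every prime ideal is some \<open>T(q,c)\<close>, by induction on its length. The bottom component is a
  prime ideal \<open>(q)\<close> of \<open>\<int>\<close>. If the components up to \<open>n\<close> form \<open>T(q,c)\<close>, the restriction axiom puts the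
  next one inside \<open>T(q,c)\<^sub>n\<^sub>+\<^sub>1\<close>, while the induction and norm axioms, after correcting the top coefficient
  by norms of suitable elements, make it contain \<open>T(q,c)\<^sub>n\<^sub>+\<^sub>1\<close> if \<open>c < n\<close> and \<open>T(q,n+1)\<^sub>n\<^sub>+\<^sub>1\<close> if
  \<open>c = n\<close>. Over \<open>0\<close> and over \<open>p\<close> primality settles the remaining choice, by forcing \<open>p X\<^sub>n\<^sub>+\<^sub>1 - X\<^sub>n\<close>
  resp. \<open>X\<^sub>n\<close> into the component. Distinct \<open>(q,c)\<close> give distinct ideals, which yields the strict chains.\<close>

section \<open>Marks\<close>

text \<open>The Burnside mark of \<open>x \<in> R\<^sub>k\<close> at \<open>H\<^sub>t\<close>: the basis element \<open>X\<^sub>k\<^sub>,\<^sub>s = [H\<^sub>k/H\<^sub>s]\<close> has \<open>p\<^sup>k\<^sup>-\<^sup>s\<close> points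
  fixed by \<open>H\<^sub>t\<close> if \<open>t \<le> s\<close> and none otherwise.\<close>
definition mark :: "nat \<Rightarrow> nat \<Rightarrow> elt \<Rightarrow> nat \<Rightarrow> int" where
  "mark p k x t = (\<Sum>s\<in>{t..k}. x s * int p ^ (k - s))"

lemma mark_self: "mark p k x k = x k"
  by (simp add: mark_def)

lemma mark_Suc: "t < k \<Longrightarrow> mark p k x t = x t * int p ^ (k - t) + mark p k x (Suc t)"
  unfolding mark_def by (simp add: sum.atLeast_Suc_atMost)

lemma mark_lincomb:
  "mark p k (\<lambda>i. a * x i + b * y i) t = a * mark p k x t + b * mark p k y t"
  unfolding mark_def by (simp add: sum.distrib sum_distrib_left algebra_simps)

lemma mark_diff: "mark p k (\<lambda>i. x i - y i) t = mark p k x t - mark p k y t"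
  unfolding mark_def by (simp add: sum_subtractf algebra_simps)

lemma mark_scale: "mark p k (\<lambda>i. a * x i) t = a * mark p k x t"
  unfolding mark_def by (simp add: sum_distrib_left algebra_simps)

lemma mark_addR: "mark p k (addR x y) t = mark p k x t + mark p k y t"
  using mark_lincomb[of p k 1 x 1 y t] by (simp add: addR_def)

lemma mark_negR: "mark p k (negR x) t = - mark p k x t"
  using mark_lincomb[of p k "-1" x 0 x t] by (simp add: negR_def)

lemma mark_zeroR: "mark p k zeroR t = 0"
  by (simp add: mark_def zeroR_def)

lemma zeroR_carrier: "zeroR \<in> carrierR k"
  by (simp add: zeroR_def carrierR_def)

lemma elt_eqI_marks:
  assumes "prime p" "x \<in> carrierR k" "y \<in> carrierR k" "\<And>t. t \<le> k \<Longrightarrow> mark p k x t = mark p k y t"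
  shows "x = y"
proof
  fix t
  consider "k < t" | "t = k" | "t < k" by linarith
  then show "x t = y t"
  proof cases
    case 1
    then show ?thesis using assms(2,3) by (simp add: carrierR_def)
  next
    case 2
    then show ?thesis using assms(4)[of k] by (simp add: mark_self)
  next
    case 3
    \<comment> \<open>consecutive marks differ by the coefficient at \<open>t\<close> times a power of \<open>p \<noteq> 0\<close>\<close>
    have "mark p k x t = mark p k y t" "mark p k x (Suc t) = mark p k y (Suc t)"
      using 3 assms(4) by auto
    then have "x t * int p ^ (k - t) = y t * int p ^ (k - t)"
      using mark_Suc[OF 3, of p x] mark_Suc[OF 3, of p y] by linarith
    then show ?thesis using prime_gt_0_nat[OF assms(1)] by auto
  qed
qed

lemma eq_zeroR_if_marks_zero:
  assumes "prime p" "x \<in> carrierR k" "\<And>t. t \<le> k \<Longrightarrow> mark p k x t = 0"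
  shows "x = zeroR"
  using elt_eqI_marks[OF assms(1,2) zeroR_carrier] assms(3) by (simp add: mark_zeroR)

lemma mulR_carrier: "mulR p k x y \<in> carrierR k"
  by (simp add: mulR_def carrierR_def)

lemma mark_mulR:
  assumes "t \<le> k"
  shows "mark p k (mulR p k x y) t = mark p k x t * mark p k y t"
proof -
  let ?P = "int p"
  have sum_atMost: "mark p k z t = (\<Sum>i\<le>k. if t \<le> i then z i * ?P ^ (k - i) else 0)" for z
  proof -
    have "{t..k} = {i\<in>{..k}. t \<le> i}" by auto
    then show ?thesis unfolding mark_def by (simp only: sum.inter_filter[OF finite_atMost])
  qed
  have "mark p k (mulR p k x y) t = (\<Sum>m\<in>{t..k}. (\<Sum>i\<le>k. \<Sum>j\<le>k. if min i j = m then x i * y j * ?P ^ (k - max i j) else 0) * ?P ^ (k - m))"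
    unfolding mark_def mulR_def by (rule sum.cong) auto
  also have "\<dots> = (\<Sum>m\<in>{t..k}. \<Sum>i\<le>k. \<Sum>j\<le>k. if min i j = m then x i * y j * ?P ^ (k - max i j) * ?P ^ (k - min i j) else 0)"
    by (simp only: sum_distrib_right, intro sum.cong refl, auto)
  also have "\<dots> = (\<Sum>i\<le>k. \<Sum>j\<le>k. \<Sum>m\<in>{t..k}. if min i j = m then x i * y j * ?P ^ (k - max i j) * ?P ^ (k - min i j) else 0)"
    by (subst sum.swap[where A="{t..k}"], rule sum.cong[OF refl], subst sum.swap[where A="{t..k}"]) (rule refl)
  also have "\<dots> = (\<Sum>i\<le>k. \<Sum>j\<le>k. if t \<le> min i j then x i * y j * ?P ^ (k - max i j) * ?P ^ (k - min i j) else 0)"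
    by (rule sum.cong[OF refl], rule sum.cong[OF refl]) (auto simp: sum.delta)
  also have "\<dots> = (\<Sum>i\<le>k. \<Sum>j\<le>k. (if t \<le> i then x i * ?P ^ (k - i) else 0) * (if t \<le> j then y j * ?P ^ (k - j) else 0))"
    by (rule sum.cong[OF refl], rule sum.cong[OF refl]) (auto simp: max_def min_def)
  also have "\<dots> = mark p k x t * mark p k y t"
    by (simp add: sum_product sum_atMost)
  finally show ?thesis .
qed

lemma mulR_commute:
  assumes "prime p"
  shows "mulR p k x y = mulR p k y x"
  by (rule elt_eqI_marks[OF assms mulR_carrier mulR_carrier]) (simp add: mark_mulR)

lemma resR_carrier: "resR p k i x \<in> carrierR i"
  by (simp add: resR_def carrierR_def)

lemma mark_resR:
  assumes "t \<le> i" "i \<le> k"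
  shows "mark p i (resR p k i x) t = mark p k x t"
proof -
  let ?P = "int p"
  have "{t..i} = insert i {t..<i}" using assms by auto
  then have "mark p i (resR p k i x) t = (\<Sum>m\<in>{t..<i}. ?P ^ (k - i) * x m * ?P ^ (i - m)) + (\<Sum>s\<in>{i..k}. ?P ^ (k - s) * x s)"
    unfolding mark_def by (simp add: resR_def)
  also have "(\<Sum>m\<in>{t..<i}. ?P ^ (k - i) * x m * ?P ^ (i - m)) = (\<Sum>m\<in>{t..<i}. x m * ?P ^ (k - m))"
  proof (rule sum.cong[OF refl])
    fix m assume "m \<in> {t..<i}"
    then have "k - m = (k - i) + (i - m)" using assms by auto
    then show "?P ^ (k - i) * x m * ?P ^ (i - m) = x m * ?P ^ (k - m)" by (simp add: power_add)
  qed
  also have "{t..k} = {t..<i} \<union> {i..k}" "{t..<i} \<inter> {i..k} = {}" using assms by auto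
  then have "(\<Sum>m\<in>{t..<i}. x m * ?P ^ (k - m)) + (\<Sum>s\<in>{i..k}. ?P ^ (k - s) * x s) = mark p k x t"
    unfolding mark_def by (simp add: sum.union_disjoint mult.commute)
  finally show ?thesis .
qed

lemma resR_self:
  assumes "prime p" "x \<in> carrierR k"
  shows "resR p k k x = x"
  by (rule elt_eqI_marks[OF assms(1) resR_carrier assms(2)]) (simp add: mark_resR)

lemma mark_indR:
  assumes "x \<in> carrierR k" "t \<le> k"
  shows "mark p (Suc k) x t = int p * mark p k x t"
proof -
  have "{t..Suc k} = insert (Suc k) {t..k}" using assms(2) by auto
  then have "mark p (Suc k) x t = (\<Sum>s\<in>{t..k}. x s * int p ^ (Suc k - s))"
    using assms(1) unfolding mark_def by (simp add: carrierR_def)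
  also have "\<dots> = (\<Sum>s\<in>{t..k}. int p * (x s * int p ^ (k - s)))"
    by (rule sum.cong[OF refl]) (auto simp: Suc_diff_le)
  finally show ?thesis by (simp add: mark_def sum_distrib_left)
qed

lemma mark_cong_self: "t \<le> k \<Longrightarrow> int p dvd mark p k x t - x k"
proof (induction "k - t" arbitrary: t)
  case 0
  then show ?case by (simp add: mark_self)
next
  case (Suc d)
  then have "t < k" by simp
  moreover have "int p dvd x t * int p ^ (k - t) + (mark p k x (Suc t) - x k)"
    using Suc \<open>t < k\<close> by (intro dvd_add) auto
  ultimately show ?case by (simp add: mark_Suc algebra_simps)
qed

definition constR :: "nat \<Rightarrow> int \<Rightarrow> elt" where
  "constR k d = (\<lambda>i. if i = k then d else 0)"

lemma constR_carrier: "constR k d \<in> carrierR k"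
  by (simp add: constR_def carrierR_def)

lemma mark_constR: "t \<le> k \<Longrightarrow> mark p k (constR k d) t = d"
  unfolding mark_def constR_def by (simp add: if_distrib[where f="\<lambda>v. v * _"] cong: if_cong)

lemma mark_mulR_constR: "t \<le> k \<Longrightarrow> mark p k (mulR p k (constR k d) x) t = d * mark p k x t"
  by (simp add: mark_mulR mark_constR)

lemma mulR_constR:
  assumes "prime p" "x \<in> carrierR k"
  shows "mulR p k (constR k d) x = (\<lambda>i. d * x i)"
proof (rule elt_eqI_marks[OF assms(1) mulR_carrier])
  show "(\<lambda>i. d * x i) \<in> carrierR k" using assms(2) by (simp add: carrierR_def)
  show "mark p k (mulR p k (constR k d) x) t = mark p k (\<lambda>i. d * x i) t" if "t \<le> k" for t
    using that mark_lincomb[of p k d x 0 x] by (simp add: mark_mulR_constR)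
qed

lemma mulR_constR_constR:
  assumes "prime p"
  shows "mulR p k (constR k u) (constR k v) = constR k (u * v)"
  by (rule elt_eqI_marks[OF assms mulR_carrier constR_carrier]) (simp add: mark_mulR mark_constR)

definition basisR :: "nat \<Rightarrow> elt" where
  "basisR s = (\<lambda>i. if i = s then 1 else 0)"

lemma mark_basisR: "mark p k (basisR s) t = (if t \<le> s \<and> s \<le> k then int p ^ (k - s) else 0)"
  unfolding mark_def basisR_def by (simp add: if_distrib[where f="\<lambda>v. v * _"] cong: if_cong)


section \<open>Norms in marks\<close>

lemma prime_power_Suc_dvd_pow_diff:
  fixes a b :: int
  assumes "prime p" "int p ^ e dvd a - b" "1 \<le> e"
  shows "int p ^ Suc e dvd a ^ p - b ^ p"
proof -
  have "int p dvd a - b" using assms(2,3) dvd_power[of e "int p"] dvd_trans by auto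
  then have cab: "[a = b] (mod int p)" by (simp add: cong_iff_dvd_diff)
  \<comment> \<open>\<open>a ^ p - b ^ p = (a - b) * s\<close>, and \<open>s \<equiv> p * b ^ (p - 1) \<equiv> 0\<close> modulo \<open>p\<close> since \<open>a \<equiv> b\<close>\<close>
  have "[(\<Sum>i<p. b ^ (p - Suc i) * a ^ i) = (\<Sum>i<p. b ^ (p - Suc i) * b ^ i)] (mod int p)"
    by (intro cong_sum cong_mult cong_refl cong_pow cab)
  moreover have "(\<Sum>i<p. b ^ (p - Suc i) * b ^ i) = int p * b ^ (p - 1)"
    by (simp add: power_add[symmetric])
  ultimately have "int p dvd (\<Sum>i<p. b ^ (p - Suc i) * a ^ i)"
    by (metis cong_dvd_iff dvd_triv_left)
  then have "int p ^ e * int p dvd (a - b) * (\<Sum>i<p. b ^ (p - Suc i) * a ^ i)"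
    using assms(2) by (rule mult_dvd_mono[rotated])
  then show ?thesis by (simp add: power_diff_sumr2 mult.commute)
qed

lemma prime_power_dvd_pow_pow_diff:
  fixes a b :: int
  assumes "prime p" "int p ^ e dvd a - b" "1 \<le> e"
  shows "int p ^ (e + t) dvd a ^ (p ^ t) - b ^ (p ^ t)"
proof (induction t)
  case 0
  then show ?case using assms by simp
next
  case (Suc t)
  then have "int p ^ Suc (e + t) dvd (a ^ (p ^ t)) ^ p - (b ^ (p ^ t)) ^ p"
    using prime_power_Suc_dvd_pow_diff[OF assms(1)] assms(3) by simp
  then show ?case by (simp add: power_mult[symmetric] mult.commute)
qed

lemma prime_dvd_pow_self_diff:
  fixes x :: int
  assumes "prime p"
  shows "int p dvd x ^ p - x"
proof -
  define a where "a = nat (x mod int p)"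
  have xa: "[x = int a] (mod int p)"
    using prime_gt_0_nat[OF assms] unfolding a_def by (simp add: cong_def)
  have "[a ^ p = a] (mod p)"
  proof (cases "p dvd a")
    case True
    moreover have "p dvd a ^ p"
      using True prime_gt_0_nat[OF assms] by (meson dvd_power dvd_trans)
    ultimately show ?thesis by (simp add: cong_def dvd_eq_mod_eq_0)
  next
    case False
    then have "[a * a ^ (p - 1) = a * 1] (mod p)"
      using fermat_theorem[OF assms] by (blast intro: cong_scalar_left)
    moreover have "a * a ^ (p - 1) = a ^ p"
      using prime_gt_0_nat[OF assms] by (simp add: power_eq_if)
    ultimately show ?thesis by simp
  qed
  then have "[int a ^ p = int a] (mod int p)"
    by (metis cong_int_iff of_nat_power)
  then have "[x ^ p = x] (mod int p)"
    using xa by (meson cong_pow cong_sym cong_trans)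
  then show ?thesis by (simp add: cong_iff_dvd_diff)
qed

definition norm_mark :: "nat \<Rightarrow> nat \<Rightarrow> nat \<Rightarrow> elt \<Rightarrow> nat \<Rightarrow> int" where
  "norm_mark p k l x t = (if t \<le> k then mark p k x t ^ (p ^ (l - k)) else x k ^ (p ^ (l - t)))"

lemma jndR_coeff:
  assumes "prime p" "k \<le> l" "i < l"
  shows "jndR p k l x i * int p ^ (l - i) = norm_mark p k l x i - norm_mark p k l x (Suc i)"
proof -
  have "int p ^ (l - i) dvd norm_mark p k l x i - norm_mark p k l x (Suc i)
    \<and> jndR p k l x i = (norm_mark p k l x i - norm_mark p k l x (Suc i)) div int p ^ (l - i)"
  proof (cases "i < k")
    case True
    have "mark p k x i - mark p k x (Suc i) = x i * int p ^ (k - i)"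
      using mark_Suc[OF True] by simp
    then have "int p ^ (k - i + (l - k)) dvd mark p k x i ^ (p ^ (l - k)) - mark p k x (Suc i) ^ (p ^ (l - k))"
      using True by (intro prime_power_dvd_pow_pow_diff[OF assms(1)]) auto
    moreover have "k - i + (l - k) = l - i" using True assms by auto
    ultimately show ?thesis
      using True assms unfolding norm_mark_def jndR_def mark_def by (auto simp: Suc_le_eq)
  next
    case False
    define s where "s = l - Suc i"
    have ls: "l - i = Suc s" using assms s_def by auto
    have "int p ^ (1 + s) dvd (x k ^ p) ^ (p ^ s) - x k ^ (p ^ s)"
      using prime_dvd_pow_self_diff[OF assms(1)] by (intro prime_power_dvd_pow_pow_diff[OF assms(1)]) auto
    moreover have "(x k ^ p) ^ (p ^ s) = x k ^ (p ^ Suc s)"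
      by (simp add: power_mult[symmetric])
    moreover have "norm_mark p k l x i = x k ^ (p ^ (l - i))" "norm_mark p k l x (Suc i) = x k ^ (p ^ s)"
      using False mark_self[of p k x] unfolding norm_mark_def s_def by auto
    moreover have "jndR p k l x i = (x k ^ (p ^ (l - i)) - x k ^ (p ^ s)) div int p ^ (l - i)"
      using False assms unfolding jndR_def s_def by auto
    ultimately show ?thesis using ls by auto
  qed
  then show ?thesis by auto
qed

lemma mark_telescope:
  assumes "\<And>i. t \<le> i \<Longrightarrow> i < l \<Longrightarrow> y i * int p ^ (l - i) = f i - f (Suc i)"
    and "y l = f l" and "t \<le> l"
  shows "mark p l y t = f t"
  using assms
proof (induction "l - t" arbitrary: t)
  case 0
  then show ?case by (simp add: mark_self)
next
  case (Suc d)
  then have "t < l" by simp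
  moreover have "mark p l y (Suc t) = f (Suc t)"
    using Suc \<open>t < l\<close> by auto
  ultimately show ?case using mark_Suc[of t l p y] Suc.prems(1)[of t] by simp
qed

lemma jndR_carrier: "k \<le> l \<Longrightarrow> jndR p k l x \<in> carrierR l"
  by (simp add: jndR_def carrierR_def)

lemma mark_jndR:
  assumes "prime p" "k \<le> l" "t \<le> l"
  shows "mark p l (jndR p k l x) t = norm_mark p k l x t"
  using jndR_coeff[OF assms(1,2)] assms(2,3)
  by (intro mark_telescope) (auto simp: jndR_def norm_mark_def mark_self)

lemma mark_jndR_self: "mark p l (jndR p k l x) l = x k"
  by (simp add: mark_self jndR_def)

lemma mark_jndR_le:
  assumes "prime p" "k \<le> l" "t \<le> k"
  shows "mark p l (jndR p k l x) t = mark p k x t ^ (p ^ (l - k))"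
  using assms by (simp add: mark_jndR norm_mark_def)

lemma jndR_self:
  assumes "prime p" "x \<in> carrierR k"
  shows "jndR p k k x = x"
  by (rule elt_eqI_marks[OF assms(1) jndR_carrier assms(2)]) (simp_all add: mark_jndR_le assms(1))

lemma jndR_trans_Suc:
  assumes "prime p" "i \<le> M"
  shows "jndR p i (Suc M) y = jndR p M (Suc M) (jndR p i M y)"
proof (rule elt_eqI_marks[OF assms(1) jndR_carrier jndR_carrier])
  fix t assume t: "t \<le> Suc M"
  show "mark p (Suc M) (jndR p i (Suc M) y) t = mark p (Suc M) (jndR p M (Suc M) (jndR p i M y)) t"
  proof (cases "t \<le> M")
    case True
    then have "norm_mark p i (Suc M) y t = norm_mark p i M y t ^ p"
      using assms by (cases "t \<le> i") (simp_all add: norm_mark_def power_mult[symmetric] Suc_diff_le mult.commute)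
    moreover have "mark p (Suc M) (jndR p M (Suc M) (jndR p i M y)) t = mark p M (jndR p i M y) t ^ p"
      using mark_jndR_le[OF assms(1), of M "Suc M" t] True by simp
    ultimately show ?thesis using True assms by (simp add: mark_jndR)
  next
    case False
    then have "t = Suc M" using t by simp
    then show ?thesis by (simp only: mark_jndR_self) (simp add: jndR_def)
  qed
qed (use assms in auto)

section \<open>The prime ideals \<open>T(q,c)\<close>\<close>

lemma ideal_R_addR: "is_ideal_R p k I \<Longrightarrow> x \<in> I \<Longrightarrow> y \<in> I \<Longrightarrow> addR x y \<in> I"
  by (simp add: is_ideal_R_def)

lemma ideal_R_mulR: "is_ideal_R p k I \<Longrightarrow> a \<in> carrierR k \<Longrightarrow> x \<in> I \<Longrightarrow> mulR p k a x \<in> I"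
  by (simp add: is_ideal_R_def)

lemma ideal_R_carrier: "is_ideal_R p k I \<Longrightarrow> x \<in> I \<Longrightarrow> x \<in> carrierR k"
  by (auto simp: is_ideal_R_def)

lemma ideal_R_zeroR: "is_ideal_R p k I \<Longrightarrow> zeroR \<in> I"
  by (simp add: is_ideal_R_def)

text \<open>\<open>mark_ideal p q c m\<close> is \<open>T(q,c)\<^sub>m\<close>, and \<open>mark_TF_ideal p q c n\<close> is \<open>T(q,c)\<close> as an ideal of \<open>\<Omega>\<^bsub>H\<^sub>n\<^esub>\<close>.\<close>
definition mark_ideal :: "nat \<Rightarrow> int \<Rightarrow> nat \<Rightarrow> nat \<Rightarrow> elt set" where
  "mark_ideal p q c m = {x \<in> carrierR m. \<forall>t \<le> min m c. q dvd mark p m x t}"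

definition mark_TF_ideal :: "nat \<Rightarrow> int \<Rightarrow> nat \<Rightarrow> nat \<Rightarrow> elt set list" where
  "mark_TF_ideal p q c n = map (mark_ideal p q c) [0..<Suc n]"

lemma length_mark_TF_ideal [simp]: "length (mark_TF_ideal p q c n) = Suc n"
  by (simp add: mark_TF_ideal_def)

lemma nth_mark_TF_ideal [simp]: "m \<le> n \<Longrightarrow> mark_TF_ideal p q c n ! m = mark_ideal p q c m"
  by (simp add: mark_TF_ideal_def nth_append del: upt_Suc)

lemma mark_TF_ideal_Suc: "mark_TF_ideal p q c (Suc n) = mark_TF_ideal p q c n @ [mark_ideal p q c (Suc n)]"
  by (simp add: mark_TF_ideal_def)

lemma mark_ideal_cap: "m \<le> c \<Longrightarrow> m \<le> c' \<Longrightarrow> mark_ideal p q c m = mark_ideal p q c' m"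
  by (simp add: mark_ideal_def)

lemma mark_TF_ideal_cap: "n \<le> c \<Longrightarrow> n \<le> c' \<Longrightarrow> mark_TF_ideal p q c n = mark_TF_ideal p q c' n"
  unfolding mark_TF_ideal_def by (rule map_cong[OF refl], rule mark_ideal_cap) auto

lemma mark_ideal_zero_level: "mark_ideal p q c 0 = {x \<in> carrierR 0. q dvd x 0}"
  by (simp add: mark_ideal_def mark_self)

lemma mark_ideal_zero_top:
  assumes "prime p" "m \<le> c"
  shows "mark_ideal p 0 c m = {zeroR}"
proof (intro equalityI subsetI)
  fix x assume "x \<in> mark_ideal p 0 c m"
  then have "x \<in> carrierR m" "\<And>t. t \<le> m \<Longrightarrow> mark p m x t = 0"
    using assms(2) by (auto simp: mark_ideal_def)
  then show "x \<in> {zeroR}" using eq_zeroR_if_marks_zero[OF assms(1)] by blast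
qed (simp add: mark_ideal_def zeroR_carrier mark_zeroR)

text \<open>Since all marks of \<open>x \<in> R\<^sub>m\<close> are congruent to \<open>x m\<close> modulo \<open>p\<close>, the level \<open>c\<close> is irrelevant for \<open>q = p\<close>.\<close>
lemma mark_ideal_p: "mark_ideal p (int p) c m = mark_ideal p (int p) 0 m"
proof -
  have "int p dvd mark p m x t \<longleftrightarrow> int p dvd x m" if "t \<le> m" for x t
    using dvd_add_right_iff[OF mark_cong_self[OF that, of p x], of "x m"] by simp
  then show ?thesis by (auto simp: mark_ideal_def)
qed

lemma mark_TF_ideal_p: "mark_TF_ideal p (int p) c n = mark_TF_ideal p (int p) 0 n"
  unfolding mark_TF_ideal_def by (simp add: mark_ideal_p[of p c])

lemma is_ideal_mark_ideal: "is_ideal_R p m (mark_ideal p q c m)"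
  unfolding is_ideal_R_def mark_ideal_def
  by (auto simp: zeroR_carrier mulR_carrier mark_zeroR mark_addR mark_negR mark_mulR)
     (auto simp: carrierR_def addR_def negR_def)

lemma indR_mark_ideal:
  assumes "x \<in> mark_ideal p q c n"
  shows "x \<in> mark_ideal p q c (Suc n)"
proof -
  have x: "x \<in> carrierR n" "\<forall>t \<le> min n c. q dvd mark p n x t"
    using assms by (auto simp: mark_ideal_def)
  have "q dvd mark p (Suc n) x t" if "t \<le> min (Suc n) c" for t
  proof (cases "t \<le> n")
    case True
    then show ?thesis using x that by (simp add: mark_indR)
  next
    case False
    then have "t = Suc n" using that by simp
    then show ?thesis using x(1) by (simp add: mark_self carrierR_def)
  qed
  moreover have "x \<in> carrierR (Suc n)" using x(1) by (simp add: carrierR_def)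
  ultimately show ?thesis by (simp add: mark_ideal_def)
qed

lemma jndR_mark_ideal:
  assumes "prime p" "x \<in> mark_ideal p q c n"
  shows "jndR p n (Suc n) x \<in> mark_ideal p q c (Suc n)"
proof -
  have "q dvd mark p (Suc n) (jndR p n (Suc n) x) t" if "t \<le> min (Suc n) c" for t
  proof (cases "t \<le> n")
    case True
    then have "q dvd mark p n x t" using assms(2) that by (simp add: mark_ideal_def)
    then show ?thesis
      using True prime_gt_0_nat[OF assms(1)] dvd_power_le[of q "mark p n x t" 1 p]
      by (simp add: mark_jndR_le[OF assms(1)])
  next
    case False
    then have "t = Suc n" using that by simp
    then show ?thesis using assms(2) that by (simp only: mark_jndR_self) (auto simp: mark_ideal_def mark_self)
  qed
  then show ?thesis by (simp add: mark_ideal_def jndR_carrier)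
qed

lemma resR_mark_ideal:
  assumes "x \<in> mark_ideal p q c (Suc n)"
  shows "resR p (Suc n) n x \<in> mark_ideal p q c n"
  using assms by (auto simp: mark_ideal_def resR_carrier mark_resR)

lemma is_TF_ideal_mark_TF_ideal:
  assumes "prime p"
  shows "is_TF_ideal p n (mark_TF_ideal p q c n)"
  unfolding is_TF_ideal_def
proof (intro conjI allI impI ballI)
  fix k assume "k \<in> {1..n}"
  then obtain j where "k = Suc j" "j < n" by (cases k) auto
  then show "indR (k - 1) k ` (mark_TF_ideal p q c n ! (k - 1)) \<subseteq> mark_TF_ideal p q c n ! k"
    "resR p k (k - 1) ` (mark_TF_ideal p q c n ! k) \<subseteq> mark_TF_ideal p q c n ! (k - 1)"
    "jndR p (k - 1) k ` (mark_TF_ideal p q c n ! (k - 1)) \<subseteq> mark_TF_ideal p q c n ! k"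
    by (auto simp: indR_def indR_mark_ideal resR_mark_ideal jndR_mark_ideal[OF assms])
qed (simp_all add: is_ideal_mark_ideal)

lemma is_prime_TF_mark_TF_ideal:
  assumes p: "prime p" and q: "q = 0 \<or> prime q"
  shows "is_prime_TF p n (mark_TF_ideal p q c n)"
  unfolding is_prime_TF_def
proof (intro conjI allI impI)
  show "is_TF_ideal p n (mark_TF_ideal p q c n)" by (rule is_TF_ideal_mark_TF_ideal[OF p])
  have "constR 0 1 \<notin> mark_ideal p q c 0"
    using q not_prime_unit[of q] by (auto simp: mark_ideal_zero_level constR_def)
  with constR_carrier[of 0 1]
  show "mark_TF_ideal p q c n ! 0 \<noteq> carrierR 0" by auto
  fix k l a b
  assume lk: "l \<le> k" and kn: "k \<le> n" and a: "a \<in> carrierR k" and b: "b \<in> carrierR l"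
    and H: "\<forall>i\<le>k. \<forall>j\<le>l. mulR p (max i j) (jndR p i (max i j) (resR p k i a))
              (jndR p j (max i j) (resR p l j b)) \<in> mark_TF_ideal p q c n ! max i j"
  show "a \<in> mark_TF_ideal p q c n ! k \<or> b \<in> mark_TF_ideal p q c n ! l"
  proof (rule ccontr)
    assume "\<not> ?thesis"
    then obtain i j where i: "i \<le> min k c" "\<not> q dvd mark p k a i"
      and j: "j \<le> min l c" "\<not> q dvd mark p l b j"
      using lk kn a b by (auto simp: mark_ideal_def)
    let ?M = "max i j"
    have "mark p ?M (mulR p ?M (jndR p i ?M (resR p k i a)) (jndR p j ?M (resR p l j b))) ?M
      = mark p k a i * mark p l b j"
      using i j mark_resR[of i i k p a] mark_resR[of j j l p b]
      by (simp only: mark_mulR[OF order_refl] mark_jndR_self) (simp add: mark_self)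
    moreover have "mulR p ?M (jndR p i ?M (resR p k i a)) (jndR p j ?M (resR p l j b)) \<in> mark_ideal p q c ?M"
      using H i j lk kn by auto
    ultimately have "q dvd mark p k a i * mark p l b j"
      using i j by (auto simp: mark_ideal_def)
    then show False using q i(2) j(2) by (auto dest: prime_dvd_multD)
  qed
qed

section \<open>Every prime ideal is some \<open>T(q,c)\<close>\<close>

lemma is_prime_TF_butlast:
  assumes "is_prime_TF p (Suc n) P"
  shows "is_prime_TF p n (butlast P)"
proof -
  have len: "length P = Suc (Suc n)" using assms by (simp add: is_prime_TF_def is_TF_ideal_def)
  then have nth: "butlast P ! k = P ! k" if "k \<le> n" for k using that by (simp add: nth_butlast)
  have TF: "is_TF_ideal p (Suc n) P" using assms by (simp add: is_prime_TF_def)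
  have "is_TF_ideal p n (butlast P)"
    unfolding is_TF_ideal_def
  proof (intro conjI allI impI ballI)
    fix k assume "k \<in> {1..n}"
    then have "k \<in> {1..Suc n}" "k \<le> n" "k - 1 \<le> n" by auto
    then show "indR (k - 1) k ` (butlast P ! (k - 1)) \<subseteq> butlast P ! k"
      "resR p k (k - 1) ` (butlast P ! k) \<subseteq> butlast P ! (k - 1)"
      "jndR p (k - 1) k ` (butlast P ! (k - 1)) \<subseteq> butlast P ! k"
      using TF by (simp_all add: nth is_TF_ideal_def)
  qed (use TF len in \<open>simp_all add: nth is_TF_ideal_def\<close>)
  moreover have "butlast P ! 0 \<noteq> carrierR 0" using assms by (simp add: nth is_prime_TF_def)
  moreover have "a \<in> butlast P ! k \<or> b \<in> butlast P ! l"
    if "l \<le> k" "k \<le> n" "a \<in> carrierR k" "b \<in> carrierR l"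
      "\<forall>i\<le>k. \<forall>j\<le>l. mulR p (max i j) (jndR p i (max i j) (resR p k i a))
              (jndR p j (max i j) (resR p l j b)) \<in> butlast P ! max i j" for k l a b
    using assms that unfolding is_prime_TF_def by (simp add: nth)
  ultimately show ?thesis unfolding is_prime_TF_def by blast
qed

lemma int_ideal_eq_multiples:
  fixes S :: "int set"
  assumes "0 \<in> S" and add: "\<And>u v. u \<in> S \<Longrightarrow> v \<in> S \<Longrightarrow> u + v \<in> S"
    and mult: "\<And>u v. v \<in> S \<Longrightarrow> u * v \<in> S"
  obtains g where "g \<ge> 0" "S = {v. g dvd v}"
proof (cases "S = {0}")
  case True
  then show ?thesis by (intro that[of 0]) auto
next
  case False
  then obtain u where u: "u \<in> S" "u \<noteq> 0" using assms(1) by auto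
  then have "\<bar>u\<bar> \<in> S" using mult[of u "sgn u"] by (simp add: abs_sgn mult.commute)
  then have ex: "\<exists>m::nat. m > 0 \<and> int m \<in> S" using u(2) by (intro exI[of _ "nat \<bar>u\<bar>"]) simp
  define g where "g = int (LEAST m::nat. m > 0 \<and> int m \<in> S)"
  have g: "g > 0" "g \<in> S" using LeastI_ex[OF ex] by (auto simp: g_def)
  have g_min: "g \<le> v" if "v \<in> S" "0 < v" for v
    using that Least_le[of "\<lambda>m. m > 0 \<and> int m \<in> S" "nat v"] by (simp add: g_def)
  have "v \<in> S \<longleftrightarrow> g dvd v" for v
  proof
    assume v: "v \<in> S"
    \<comment> \<open>\<open>v mod g\<close> lies in \<open>S\<close> and is smaller than its least positive element \<open>g\<close>\<close>
    have "v + (- (v div g)) * g \<in> S" using add mult v g by blast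
    then have "v mod g \<in> S" by (simp add: minus_div_mult_eq_mod[symmetric])
    moreover have "0 \<le> v mod g" "v mod g < g" using g(1) by auto
    ultimately have "v mod g = 0" by (metis g_min le_less not_le)
    then show "g dvd v" by auto
  next
    assume "g dvd v"
    then obtain w where "v = w * g" by (metis dvdE mult.commute)
    then show "v \<in> S" using mult[OF g(2), of w] by simp
  qed
  then show ?thesis using g by (intro that[of g]) auto
qed

lemma int_prime_ideal_eq_multiples:
  fixes S :: "int set"
  assumes "0 \<in> S" "\<And>u v. u \<in> S \<Longrightarrow> v \<in> S \<Longrightarrow> u + v \<in> S" "\<And>u v. v \<in> S \<Longrightarrow> u * v \<in> S"
    and "1 \<notin> S" and prime: "\<And>u v. u * v \<in> S \<Longrightarrow> u \<in> S \<or> v \<in> S"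
  obtains q where "q = 0 \<or> prime q" "S = {v. q dvd v}"
proof -
  obtain g where g: "g \<ge> 0" "S = {v. g dvd v}" by (rule int_ideal_eq_multiples[OF assms(1-3)])
  have "prime g" if "g \<noteq> 0"
    unfolding prime_int_iff
  proof (intro conjI allI impI)
    show "1 < g" using g assms(4) that by (cases "g = 1") auto
    fix m assume m: "0 \<le> m \<and> m dvd g"
    then obtain d where gd: "g = m * d" by (auto elim!: dvdE)
    then have "m dvd g" "d dvd g" "0 < m" "0 < d"
      using g(1) m that by (auto simp: zero_less_mult_iff zero_le_mult_iff)
    moreover have "g dvd m \<or> g dvd d" using prime[of m d] g gd by simp
    ultimately have "m = g \<or> d = g" using g(1) by (meson less_imp_le zdvd_antisym_nonneg)
    then show "m = 1 \<or> m = g" using gd that by auto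
  qed
  then show ?thesis using g that by blast
qed

lemma is_prime_TF_zero_level:
  assumes p: "prime p" and P: "is_prime_TF p n P"
  obtains q where "q = 0 \<or> prime q" "P ! 0 = mark_ideal p q 0 0"
proof -
  let ?I = "P ! 0"
  have I: "is_ideal_R p 0 ?I" "?I \<noteq> carrierR 0"
    using P by (auto simp: is_prime_TF_def is_TF_ideal_def)
  have res_jnd: "jndR p 0 0 (resR p 0 0 a) = a" if "a \<in> carrierR 0" for a
    using that by (simp add: resR_self jndR_self p)
  have I_prime: "a \<in> ?I \<or> b \<in> ?I" if "a \<in> carrierR 0" "b \<in> carrierR 0" "mulR p 0 a b \<in> ?I" for a b
  proof -
    have "\<forall>i\<le>0. \<forall>j\<le>0. mulR p (max i j) (jndR p i (max i j) (resR p 0 i a))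
        (jndR p j (max i j) (resR p 0 j b)) \<in> P ! max i j"
      using that res_jnd by simp
    then show ?thesis using P that(1,2) unfolding is_prime_TF_def by blast
  qed
  have carrier_zero: "x = constR 0 (x 0)" if "x \<in> carrierR 0" for x
    using that by (auto simp: carrierR_def constR_def)
  define S where "S = {u. constR 0 u \<in> ?I}"
  have mem_I: "x \<in> ?I \<longleftrightarrow> x 0 \<in> S" if "x \<in> carrierR 0" for x
    using carrier_zero[OF that] by (metis S_def mem_Collect_eq)
  have "constR 0 0 = zeroR" by (simp add: constR_def zeroR_def)
  then have "0 \<in> S" using I(1) by (simp add: S_def ideal_R_zeroR)
  moreover have "u + v \<in> S" if "u \<in> S" "v \<in> S" for u v
    using ideal_R_addR[OF I(1) that[unfolded S_def, simplified]]
    by (simp add: S_def addR_def constR_def if_distrib cong: if_cong)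
  moreover have "u * v \<in> S" if "v \<in> S" for u v
    using ideal_R_mulR[OF I(1) constR_carrier that[unfolded S_def, simplified]] by (simp add: S_def mulR_constR_constR[OF p])
  moreover have "1 \<notin> S"
  proof
    assume "1 \<in> S"
    then have "x \<in> ?I" if "x \<in> carrierR 0" for x
      using ideal_R_mulR[OF I(1) that, of "constR 0 1"] carrier_zero[OF that] mulR_constR_constR[OF p, of 0 "x 0" 1]
      by (simp add: S_def)
    then show False using I ideal_R_carrier by blast
  qed
  moreover have "u \<in> S \<or> v \<in> S" if "u * v \<in> S" for u v
    using I_prime[OF constR_carrier constR_carrier] that by (simp add: S_def mulR_constR_constR[OF p])
  ultimately obtain q where q: "q = 0 \<or> prime q" "S = {v. q dvd v}"
    by (rule int_prime_ideal_eq_multiples)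
  have "?I = mark_ideal p q 0 0"
    using mem_I q(2) ideal_R_carrier[OF I(1)] by (auto simp: mark_ideal_zero_level)
  then show ?thesis using q(1) that by blast
qed

lemma is_TF_ideal_SucD:
  assumes "is_TF_ideal p (Suc n) P"
  shows "length P = Suc (Suc n)" "is_ideal_R p (Suc n) (P ! Suc n)" "P ! n \<subseteq> P ! Suc n"
    "jndR p n (Suc n) ` (P ! n) \<subseteq> P ! Suc n" "resR p (Suc n) n ` (P ! Suc n) \<subseteq> P ! n"
proof -
  have TF: "length P = Suc (Suc n)" "\<forall>k\<le>Suc n. is_ideal_R p k (P ! k)"
    "\<forall>k\<in>{1..Suc n}. indR (k - 1) k ` (P ! (k - 1)) \<subseteq> P ! k
        \<and> resR p k (k - 1) ` (P ! k) \<subseteq> P ! (k - 1) \<and> jndR p (k - 1) k ` (P ! (k - 1)) \<subseteq> P ! k"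
    using assms unfolding is_TF_ideal_def by blast+
  then show "length P = Suc (Suc n)" "is_ideal_R p (Suc n) (P ! Suc n)" by simp_all
  have "Suc n \<in> {1..Suc n}" by simp
  from bspec[OF TF(3) this] show "P ! n \<subseteq> P ! Suc n" "jndR p n (Suc n) ` (P ! n) \<subseteq> P ! Suc n"
    "resR p (Suc n) n ` (P ! Suc n) \<subseteq> P ! n"
    by (simp_all add: indR_def)
qed

lemma subset_mark_ideal_Suc:
  assumes "c \<le> n" "is_ideal_R p (Suc n) I" "resR p (Suc n) n ` I \<subseteq> mark_ideal p q c n"
  shows "I \<subseteq> mark_ideal p q c (Suc n)"
proof
  fix x assume x: "x \<in> I"
  then have "\<forall>t\<le>c. q dvd mark p (Suc n) x t"
    using assms(1,3) by (auto simp: mark_ideal_def mark_resR)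
  then show "x \<in> mark_ideal p q c (Suc n)"
    using ideal_R_carrier[OF assms(2) x] assms(1) by (simp add: mark_ideal_def)
qed

lemma prime_not_dvd_prime:
  assumes "prime p" "prime q" "q \<noteq> int p"
  shows "\<not> q dvd int p"
proof
  assume "q dvd int p"
  moreover have "prime (int p)" using assms(1) by simp
  ultimately show False using primes_dvd_imp_eq[OF assms(2)] assms(3) by blast
qed

lemma dvd_int_mult_cancel:
  assumes "prime p" "q = 0 \<or> prime q \<and> q \<noteq> int p" "q dvd int p * m"
  shows "q dvd m"
proof (cases "q = 0")
  case True
  then show ?thesis using assms(3) prime_gt_0_nat[OF assms(1)] by simp
next
  case False
  then have "prime q" "\<not> q dvd int p" using assms(2) prime_not_dvd_prime[OF assms(1)] by auto
  then show ?thesis using assms(3) prime_dvd_multD by blast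
qed

text \<open>An element of \<open>R\<^sub>n\<^sub>+\<^sub>1\<close> with vanishing top coefficient is induced from \<open>R\<^sub>n\<close>, and induction multiplies the marks by \<open>p\<close>.\<close>
lemma mark_ideal_if_top_zero:
  assumes "prime p" "q = 0 \<or> prime q \<and> q \<noteq> int p" "c \<le> n"
    "z \<in> carrierR (Suc n)" "z (Suc n) = 0" "\<forall>t\<le>c. q dvd mark p (Suc n) z t"
  shows "z \<in> mark_ideal p q c n"
proof -
  have "z i = 0" if "n < i" for i
    using that assms(4,5) by (cases "i = Suc n") (auto simp: carrierR_def)
  then have z: "z \<in> carrierR n" by (simp add: carrierR_def)
  have "q dvd mark p n z t" if "t \<le> c" for t
  proof -
    have "q dvd mark p (Suc n) z t" using assms(6) that by blast
    then have "q dvd int p * mark p n z t"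
      using assms(3) that mark_indR[OF z, of t p] by simp
    then show ?thesis by (rule dvd_int_mult_cancel[OF assms(1,2)])
  qed
  then show ?thesis using z by (simp add: mark_ideal_def)
qed

definition epsR :: "nat \<Rightarrow> nat \<Rightarrow> elt" where
  "epsR p n = (\<lambda>i. int p * basisR n i + (-1) * basisR (n - 1) i)"

lemma epsR_carrier: "epsR p n \<in> carrierR n"
  by (auto simp: epsR_def basisR_def carrierR_def)

lemma mark_epsR: "t < n \<Longrightarrow> mark p n (epsR p n) t = 0"
  unfolding epsR_def by (simp only: mark_lincomb mark_basisR) (auto simp: Suc_diff_le)

lemma epsR_top: "0 < n \<Longrightarrow> epsR p n n = int p"
  by (auto simp: epsR_def basisR_def)

text \<open>The lifting step: subtracting multiples of the norms of \<open>q\<close> and of \<open>\<epsilon>\<^sub>n = p X\<^sub>n - X\<^sub>n\<^sub>-\<^sub>1\<close>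
  clears the top coefficient of \<open>a\<close>, leaving an element induced from \<open>T(q,c)\<^sub>n\<close>.\<close>
lemma mem_ideal_if_top_combination:
  assumes p: "prime p" and q: "q = 0 \<or> prime q \<and> q \<noteq> int p" and cn: "c \<le> n"
    and J: "is_ideal_R p (Suc n) J" "mark_ideal p q c n \<subseteq> J" "jndR p n (Suc n) ` mark_ideal p q c n \<subseteq> J"
    and a: "a \<in> carrierR (Suc n)" "\<forall>t\<le>c. q dvd mark p (Suc n) a t"
    and top: "a (Suc n) = s * int p + w * q" and cs: "c < n \<or> s = 0"
  shows "a \<in> J"
proof -
  define e where "e = (if c < n then epsR p n else zeroR)"
  have e: "e \<in> mark_ideal p q c n" "s * e n = s * int p"
    using cn cs mark_epsR[of _ n p] epsR_top[of n p] epsR_carrier zeroR_carrier mark_zeroR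
    by (auto simp: e_def mark_ideal_def)
  have "constR n q \<in> mark_ideal p q c n" by (simp add: mark_ideal_def constR_carrier mark_constR)
  then have je: "jndR p n (Suc n) e \<in> J" and jq: "jndR p n (Suc n) (constR n q) \<in> J"
    using J(3) e(1) by auto
  define z where "z = (\<lambda>i. a i - s * jndR p n (Suc n) e i - w * jndR p n (Suc n) (constR n q) i)"
  have z: "z \<in> carrierR (Suc n)" "z (Suc n) = 0"
    using a(1) top e(2) jndR_carrier[of n "Suc n" p] by (auto simp: z_def carrierR_def jndR_def constR_def)
  have "q dvd mark p (Suc n) z t" if t: "t \<le> c" for t
  proof -
    have "mark p (Suc n) z t = mark p (Suc n) a t - s * mark p n e t ^ p - w * q ^ p"
      using t cn unfolding z_def by (simp add: mark_diff mark_scale mark_jndR_le[OF p] mark_constR)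
    moreover have "q dvd mark p n e t" using e(1) t cn by (simp add: mark_ideal_def)
    ultimately show ?thesis
      using a(2) t prime_gt_0_nat[OF p] dvd_power_le[of q _ 1 p] by simp
  qed
  then have "z \<in> J" using mark_ideal_if_top_zero[OF p q cn z] J(2) by blast
  then have "addR z (addR (mulR p (Suc n) (constR (Suc n) s) (jndR p n (Suc n) e))
      (mulR p (Suc n) (constR (Suc n) w) (jndR p n (Suc n) (constR n q)))) \<in> J"
    by (intro ideal_R_addR[OF J(1)] ideal_R_mulR[OF J(1)] constR_carrier je jq)
  moreover have "addR z (addR (mulR p (Suc n) (constR (Suc n) s) (jndR p n (Suc n) e))
      (mulR p (Suc n) (constR (Suc n) w) (jndR p n (Suc n) (constR n q)))) = a"
    by (simp add: mulR_constR[OF p jndR_carrier] addR_def z_def)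
  ultimately show ?thesis by simp
qed

lemma mark_ideal_Suc_subset:
  assumes p: "prime p" and q: "q = 0 \<or> prime q \<and> q \<noteq> int p"
    and J: "is_ideal_R p (Suc n) J" "mark_ideal p q n n \<subseteq> J" "jndR p n (Suc n) ` mark_ideal p q n n \<subseteq> J"
  shows "mark_ideal p q (Suc n) (Suc n) \<subseteq> J"
proof
  fix a assume a: "a \<in> mark_ideal p q (Suc n) (Suc n)"
  then have "a \<in> carrierR (Suc n)" "\<forall>t\<le>Suc n. q dvd mark p (Suc n) a t"
    by (auto simp: mark_ideal_def)
  moreover have "q dvd a (Suc n)"
    using calculation(2) mark_self[of p "Suc n" a] by auto
  then obtain w where "a (Suc n) = 0 * int p + w * q" by (metis dvdE mult.commute mult_zero_left add_0)
  ultimately show "a \<in> J"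
    by (intro mem_ideal_if_top_combination[OF p q order_refl J]) auto
qed

lemma next_component_eq:
  assumes p: "prime p" and q: "q = 0 \<or> prime q \<and> q \<noteq> int p" and cn: "c < n"
    and I: "is_ideal_R p (Suc n) I" "mark_ideal p q c n \<subseteq> I" "jndR p n (Suc n) ` mark_ideal p q c n \<subseteq> I"
      "resR p (Suc n) n ` I \<subseteq> mark_ideal p q c n"
  shows "I = mark_ideal p q c (Suc n)"
proof
  show "I \<subseteq> mark_ideal p q c (Suc n)" using subset_mark_ideal_Suc[OF _ I(1,4)] cn by simp
  show "mark_ideal p q c (Suc n) \<subseteq> I"
  proof
    fix a assume a: "a \<in> mark_ideal p q c (Suc n)"
    then have am: "a \<in> carrierR (Suc n)" "\<forall>t\<le>c. q dvd mark p (Suc n) a t"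
      using cn by (auto simp: mark_ideal_def)
    \<comment> \<open>for \<open>q = 0\<close> the top coefficient is divisible by \<open>p\<close>, being congruent to the vanishing mark at \<open>0\<close>;
      otherwise \<open>p\<close> and \<open>q\<close> are coprime\<close>
    have "\<exists>s w. a (Suc n) = s * int p + w * q"
    proof (cases "q = 0")
      case True
      then have "int p dvd a (Suc n)" using am(2) mark_cong_self[of 0 "Suc n" p a] by simp
      then obtain k where "a (Suc n) = k * int p" by (metis dvdE mult.commute)
      then show ?thesis by (intro exI[of _ k] exI[of _ 0]) simp
    next
      case False
      then have "coprime (int p) q"
        using q prime_not_dvd_prime[OF p] by (auto simp: prime_imp_coprime coprime_commute)
      then obtain u v where "u * int p + v * q = 1" using bezout_int[of "int p" q] by auto
      then have "a (Suc n) = (a (Suc n) * u) * int p + (a (Suc n) * v) * q"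
        by (metis mult.right_neutral distrib_left mult.assoc)
      then show ?thesis by blast
    qed
    then show "a \<in> I"
      using mem_ideal_if_top_combination[OF p q less_imp_le[OF cn] I(1-3) am] cn by blast
  qed
qed

lemma next_component_cases_prime:
  assumes p: "prime p" and q: "prime q" "q \<noteq> int p"
    and I: "is_ideal_R p (Suc n) I" "mark_ideal p q n n \<subseteq> I" "jndR p n (Suc n) ` mark_ideal p q n n \<subseteq> I"
      "resR p (Suc n) n ` I \<subseteq> mark_ideal p q n n"
  shows "I = mark_ideal p q n (Suc n) \<or> I = mark_ideal p q (Suc n) (Suc n)"
proof (cases "I \<subseteq> mark_ideal p q (Suc n) (Suc n)")
  case True
  then show ?thesis using mark_ideal_Suc_subset[OF p _ I(1-3)] q by blast
next
  case False
  have up: "I \<subseteq> mark_ideal p q n (Suc n)" using subset_mark_ideal_Suc[OF _ I(1,4)] by simp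
  from False obtain x where x: "x \<in> I" "x \<notin> mark_ideal p q (Suc n) (Suc n)" by blast
  have xc: "x \<in> carrierR (Suc n)" and xm: "\<forall>t\<le>n. q dvd mark p (Suc n) x t"
    using up x(1) by (auto simp: mark_ideal_def)
  then have "\<not> q dvd x (Suc n)"
    using x(2) mark_self[of p "Suc n" x] by (auto simp: mark_ideal_def le_Suc_eq)
  then obtain u where u: "[x (Suc n) * u = 1] (mod q)"
    using q(1) cong_solve_coprime_int prime_imp_coprime coprime_commute by metis
  \<comment> \<open>\<open>x\<close> is a unit modulo the smaller ideal, so subtracting a multiple of \<open>x\<close> kills the top mark\<close>
  have "y \<in> I" if y: "y \<in> mark_ideal p q n (Suc n)" for y
  proof -
    define v where "v = u * y (Suc n)"
    define y' where "y' = (\<lambda>i. y i - v * x i)"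
    have yc: "y \<in> carrierR (Suc n)" and ym: "\<forall>t\<le>n. q dvd mark p (Suc n) y t"
      using y by (auto simp: mark_ideal_def)
    have "[y (Suc n) * (x (Suc n) * u) = y (Suc n) * 1] (mod q)"
      using u by (rule cong_scalar_left)
    then have "q dvd y (Suc n) - v * x (Suc n)"
      by (simp add: v_def cong_iff_dvd_diff ac_simps)
    then have "q dvd mark p (Suc n) y' t" if "t \<le> Suc n" for t
      using that xm ym by (cases "t = Suc n") (auto simp: y'_def mark_diff mark_scale mark_self le_Suc_eq)
    moreover have "y' \<in> carrierR (Suc n)" using yc xc by (simp add: carrierR_def y'_def)
    ultimately have "y' \<in> I"
      using mark_ideal_Suc_subset[OF p _ I(1-3)] q by (auto simp: mark_ideal_def)
    moreover have "y = addR y' (mulR p (Suc n) (constR (Suc n) v) x)"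
      using mulR_constR[OF p xc] by (simp add: addR_def y'_def)
    ultimately show "y \<in> I" using ideal_R_addR[OF I(1)] ideal_R_mulR[OF I(1) constR_carrier x(1)] by simp
  qed
  then show ?thesis using up by blast
qed

lemma prime_TF_condition:
  assumes "is_prime_TF p n P" "l \<le> k" "k \<le> n" "a \<in> carrierR k" "b \<in> carrierR l"
    "\<And>i j. i \<le> k \<Longrightarrow> j \<le> l \<Longrightarrow> mulR p (max i j) (jndR p i (max i j) (resR p k i a))
       (jndR p j (max i j) (resR p l j b)) \<in> P ! max i j"
  shows "a \<in> P ! k \<or> b \<in> P ! l"
  using assms unfolding is_prime_TF_def by blast

lemma mark_ideal_zero_multiple_epsR:
  assumes p: "prime p" and y: "y \<in> mark_ideal p 0 n (Suc n)"
  shows "y = mulR p (Suc n) (constR (Suc n) (- y n)) (epsR p (Suc n))"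
proof (rule elt_eqI_marks[OF p _ mulR_carrier])
  have yc: "y \<in> carrierR (Suc n)" and ym: "\<And>t. t \<le> n \<Longrightarrow> mark p (Suc n) y t = 0"
    using y by (auto simp: mark_ideal_def)
  then show "y \<in> carrierR (Suc n)" by simp
  have "mark p (Suc n) y n = y n * int p + y (Suc n)"
    using mark_Suc[of n "Suc n" p y] by (simp add: mark_self)
  then have "y (Suc n) = - y n * int p" using ym[of n] by simp
  then show "mark p (Suc n) y t = mark p (Suc n) (mulR p (Suc n) (constR (Suc n) (- y n)) (epsR p (Suc n))) t"
    if "t \<le> Suc n" for t
    unfolding mark_mulR_constR[OF that] using that ym mark_epsR[of t "Suc n" p] epsR_top[of "Suc n" p]
    by (cases "t = Suc n") (auto simp: mark_self)
qed

lemma mulR_jndR_resR_epsR: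
  assumes "prime p" "i \<le> n"
  shows "mulR p i (jndR p i i (resR p (Suc n) i (epsR p (Suc n)))) y = zeroR"
proof (rule eq_zeroR_if_marks_zero[OF assms(1) mulR_carrier])
  fix t assume "t \<le> i"
  then show "mark p i (mulR p i (jndR p i i (resR p (Suc n) i (epsR p (Suc n)))) y) t = 0"
    using assms(2) mark_epsR[of t "Suc n" p]
    by (simp add: mark_mulR jndR_self[OF assms(1) resR_carrier] mark_resR)
qed

lemma mulR_epsR_jndR_constR:
  assumes "prime p"
  shows "mulR p (Suc n) (epsR p (Suc n)) (jndR p 0 (Suc n) (constR 0 d))
    = mulR p (Suc n) (constR (Suc n) d) (epsR p (Suc n))"
proof (rule elt_eqI_marks[OF assms mulR_carrier mulR_carrier])
  fix t assume t: "t \<le> Suc n"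
  have "mark p (Suc n) (jndR p 0 (Suc n) (constR 0 d)) (Suc n) = d"
    by (simp only: mark_jndR_self) (simp add: constR_def)
  then show "mark p (Suc n) (mulR p (Suc n) (epsR p (Suc n)) (jndR p 0 (Suc n) (constR 0 d))) t
    = mark p (Suc n) (mulR p (Suc n) (constR (Suc n) d) (epsR p (Suc n))) t"
    using t mark_epsR[of t "Suc n" p] by (cases "t = Suc n") (simp_all add: mark_mulR mark_constR)
qed

text \<open>Over \<open>0\<close>: a nonzero element of the top component forces \<open>\<epsilon>\<^sub>n\<^sub>+\<^sub>1\<close> into it, by primality applied to
  \<open>\<epsilon>\<^sub>n\<^sub>+\<^sub>1\<close> and the constant \<open>d \<noteq> 0\<close> of \<open>R\<^sub>0\<close> with \<open>z = d \<epsilon>\<^sub>n\<^sub>+\<^sub>1\<close>.\<close>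
lemma epsR_mem_if_nonzero:
  assumes p: "prime p" and P: "is_prime_TF p (Suc n) P"
    and pre: "\<And>k. k \<le> n \<Longrightarrow> P ! k = mark_ideal p 0 n k"
    and z: "z \<in> P ! Suc n" "z \<in> mark_ideal p 0 n (Suc n)" "z \<noteq> zeroR"
  shows "epsR p (Suc n) \<in> P ! Suc n"
proof -
  define E where "E = epsR p (Suc n)"
  define d where "d = - z n"
  have zE: "z = mulR p (Suc n) (constR (Suc n) d) E"
    using mark_ideal_zero_multiple_epsR[OF p z(2)] by (simp add: d_def E_def)
  have "d \<noteq> 0"
  proof
    assume "d = 0"
    then have "mark p (Suc n) z t = 0" if "t \<le> Suc n" for t using that zE by (simp add: mark_mulR_constR)
    then show False using eq_zeroR_if_marks_zero[OF p] z(2,3) by (auto simp: mark_ideal_def)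
  qed
  then have "constR 0 d \<notin> P ! 0" using pre[of 0] by (simp add: mark_ideal_zero_level constR_def)
  moreover have "E \<in> P ! Suc n \<or> constR 0 d \<in> P ! 0"
  proof (rule prime_TF_condition[OF P le0 order_refl epsR_carrier[of p "Suc n", folded E_def] constR_carrier])
    fix i j :: nat assume i: "i \<le> Suc n" and "j \<le> 0"
    then have j: "j = 0" by simp
    have res_d: "resR p 0 0 (constR 0 d) = constR 0 d" using resR_self[OF p constR_carrier] .
    show "mulR p (max i j) (jndR p i (max i j) (resR p (Suc n) i E)) (jndR p j (max i j) (resR p 0 j (constR 0 d)))
      \<in> P ! max i j"
    proof (cases "i \<le> n")
      case True
      then show ?thesis using j res_d pre[OF True] ideal_R_zeroR[OF is_ideal_mark_ideal]
        by (simp add: mulR_jndR_resR_epsR[OF p True] E_def)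
    next
      case False
      then have "i = Suc n" using i by simp
      then show ?thesis using j res_d z(1) zE resR_self[OF p epsR_carrier] jndR_self[OF p epsR_carrier]
        by (simp add: mulR_epsR_jndR_constR[OF p] E_def)
    qed
  qed
  ultimately show ?thesis by (simp add: E_def)
qed

lemma next_component_cases_zero:
  assumes p: "prime p" and P: "is_prime_TF p (Suc n) P"
    and pre: "\<And>k. k \<le> n \<Longrightarrow> P ! k = mark_ideal p 0 n k"
  shows "P ! Suc n = mark_ideal p 0 n (Suc n) \<or> P ! Suc n = mark_ideal p 0 (Suc n) (Suc n)"
proof -
  have TF: "is_TF_ideal p (Suc n) P" using P by (simp add: is_prime_TF_def)
  have I: "is_ideal_R p (Suc n) (P ! Suc n)" by (rule is_TF_ideal_SucD(2)[OF TF])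
  have "resR p (Suc n) n ` (P ! Suc n) \<subseteq> mark_ideal p 0 n n"
    using is_TF_ideal_SucD(5)[OF TF] pre[of n] by simp
  then have up: "P ! Suc n \<subseteq> mark_ideal p 0 n (Suc n)"
    by (rule subset_mark_ideal_Suc[OF order_refl I])
  show ?thesis
  proof (cases "P ! Suc n \<subseteq> {zeroR}")
    case True
    then have "P ! Suc n = {zeroR}" using ideal_R_zeroR[OF I] by blast
    then show ?thesis using mark_ideal_zero_top[OF p order_refl, of "Suc n"] by simp
  next
    case False
    then obtain z where "z \<in> P ! Suc n" "z \<noteq> zeroR" by blast
    then have eps: "epsR p (Suc n) \<in> P ! Suc n"
      using epsR_mem_if_nonzero[OF p P pre] up by blast
    have "y \<in> P ! Suc n" if "y \<in> mark_ideal p 0 n (Suc n)" for y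
      using ideal_R_mulR[OF I constR_carrier eps, of "- y n"]
      by (simp only: mark_ideal_zero_multiple_epsR[OF p that, symmetric])
    then show ?thesis using up by blast
  qed
qed

lemma basisR_carrier_Suc: "basisR n \<in> carrierR (Suc n)"
  by (auto simp: basisR_def carrierR_def)

lemma mark_basisR_Suc: "mark p (Suc n) (basisR n) t = (if t \<le> n then int p else 0)"
  by (simp add: mark_basisR)

lemma mulR_basisR_self:
  assumes p: "prime p"
  shows "mulR p (Suc n) (basisR n) (basisR n) = constR n (int p)"
proof (rule elt_eqI_marks[OF p mulR_carrier])
  show "constR n (int p) \<in> carrierR (Suc n)" by (simp add: constR_def carrierR_def)
  show "mark p (Suc n) (mulR p (Suc n) (basisR n) (basisR n)) t = mark p (Suc n) (constR n (int p)) t"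
    if "t \<le> Suc n" for t
    using that mark_indR[OF constR_carrier, of t n p "int p"]
    by (cases "t \<le> n") (simp_all add: mark_mulR mark_basisR_Suc mark_constR,
        auto simp: le_Suc_eq mark_self constR_def)
qed

lemma dvd_mark_jndR_resR_basisR:
  assumes p: "prime p" and "i \<le> M" "M \<le> Suc n"
  shows "int p dvd mark p M (jndR p i M (resR p (Suc n) i (basisR n))) 0"
proof -
  have "mark p i (resR p (Suc n) i (basisR n)) 0 = int p"
    using assms mark_resR[of 0 i "Suc n" p "basisR n"] by (simp add: mark_basisR_Suc)
  moreover have "1 \<le> p ^ (M - i)" using prime_gt_0_nat[OF p] by simp
  ultimately show ?thesis
    using mark_jndR_le[OF p assms(2) le0] dvd_power_le[of "int p" "int p" 1 "p ^ (M - i)"] by simp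
qed

text \<open>Over \<open>p\<close>: with \<open>x = X\<^sub>n\<close> in \<open>R\<^sub>n\<^sub>+\<^sub>1\<close>, every product in the prime condition for \<open>(x, x)\<close> lies in the ideal,
  since \<open>x\<^sup>2 = p X\<^sub>n\<close> and all marks of \<open>x\<close> below the top equal \<open>p\<close>.\<close>
lemma basisR_mem_over_p:
  assumes p: "prime p" and P: "is_prime_TF p (Suc n) P"
    and pre: "\<And>k. k \<le> n \<Longrightarrow> P ! k = mark_ideal p (int p) 0 k"
  shows "basisR n \<in> P ! Suc n"
proof -
  let ?x = "basisR n"
  have TF: "is_TF_ideal p (Suc n) P" using P by (simp add: is_prime_TF_def)
  note I = is_TF_ideal_SucD(2)[OF TF]
  have norm_mem: "jndR p j (Suc n) (resR p (Suc n) j ?x) \<in> P ! Suc n" if "j \<le> n" for j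
  proof -
    have "jndR p j n (resR p (Suc n) j ?x) \<in> P ! n"
      using dvd_mark_jndR_resR_basisR[OF p that le_SucI[OF order_refl]] pre[of n] jndR_carrier[OF that]
      by (simp add: mark_ideal_def)
    then show ?thesis
      using is_TF_ideal_SucD(4)[OF TF] jndR_trans_Suc[OF p that] by auto
  qed
  have top: "jndR p (Suc n) (Suc n) (resR p (Suc n) (Suc n) ?x) = ?x"
    using resR_self[OF p basisR_carrier_Suc] jndR_self[OF p basisR_carrier_Suc] by simp
  have "constR n (int p) \<in> P ! n"
    using pre[of n] by (simp add: mark_ideal_def constR_carrier mark_constR)
  then have square: "mulR p (Suc n) ?x ?x \<in> P ! Suc n"
    using is_TF_ideal_SucD(3)[OF TF] mulR_basisR_self[OF p] by auto
  have "?x \<in> P ! Suc n \<or> ?x \<in> P ! Suc n"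
  proof (rule prime_TF_condition[OF P order_refl order_refl basisR_carrier_Suc basisR_carrier_Suc])
    fix i j assume i: "i \<le> Suc n" and j: "j \<le> Suc n"
    consider "max i j \<le> n" | "i = Suc n" "j = Suc n" | "i = Suc n" "j \<le> n" | "i \<le> n" "j = Suc n"
      using i j by linarith
    then show "mulR p (max i j) (jndR p i (max i j) (resR p (Suc n) i ?x))
        (jndR p j (max i j) (resR p (Suc n) j ?x)) \<in> P ! max i j"
    proof cases
      case 1
      then show ?thesis
        using pre[OF 1] dvd_mark_jndR_resR_basisR[OF p, of i "max i j"] i
        by (simp add: mark_ideal_def mulR_carrier mark_mulR)
    next
      case 2
      then show ?thesis using top square by simp
    next
      case 3
      then show ?thesis using top ideal_R_mulR[OF I basisR_carrier_Suc norm_mem] by simp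
    next
      case 4
      then show ?thesis using top ideal_R_mulR[OF I basisR_carrier_Suc norm_mem] mulR_commute[OF p] by simp
    qed
  qed
  then show ?thesis by simp
qed

lemma next_component_over_p:
  assumes p: "prime p" and P: "is_prime_TF p (Suc n) P"
    and pre: "\<And>k. k \<le> n \<Longrightarrow> P ! k = mark_ideal p (int p) 0 k"
  shows "P ! Suc n = mark_ideal p (int p) 0 (Suc n)"
proof
  have TF: "is_TF_ideal p (Suc n) P" using P by (simp add: is_prime_TF_def)
  note I = is_TF_ideal_SucD(2)[OF TF]
  have "resR p (Suc n) n ` (P ! Suc n) \<subseteq> mark_ideal p (int p) 0 n"
    using is_TF_ideal_SucD(5)[OF TF] pre[of n] by simp
  then show "P ! Suc n \<subseteq> mark_ideal p (int p) 0 (Suc n)"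
    by (rule subset_mark_ideal_Suc[OF le0 I])
  have x: "basisR n \<in> P ! Suc n" by (rule basisR_mem_over_p[OF p P pre])
  have from_below: "y \<in> P ! Suc n" if "y \<in> mark_ideal p (int p) 0 n" for y
    using that pre[of n] is_TF_ideal_SucD(3)[OF TF] by auto
  define jq where "jq = jndR p n (Suc n) (constR n (int p))"
  have "constR n (int p) \<in> mark_ideal p (int p) 0 n"
    by (simp add: mark_ideal_def constR_carrier mark_constR)
  then have jq: "jq \<in> P ! Suc n" "jq \<in> carrierR (Suc n)" "jq (Suc n) = int p"
    using pre[of n] is_TF_ideal_SucD(4)[OF TF]
    by (auto simp: jq_def jndR_carrier, simp add: jndR_def constR_def)
  show "mark_ideal p (int p) 0 (Suc n) \<subseteq> P ! Suc n"
  proof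
    fix y assume y: "y \<in> mark_ideal p (int p) 0 (Suc n)"
    then have yc: "y \<in> carrierR (Suc n)" and "int p dvd mark p (Suc n) y 0"
      by (auto simp: mark_ideal_def)
    then have "int p dvd y (Suc n)"
      using dvd_add_right_iff[OF mark_cong_self[of 0 "Suc n" p y], of "y (Suc n)"] by simp
    then obtain d where d: "y (Suc n) = int p * d" by (auto elim: dvdE)
    \<comment> \<open>subtract multiples of the norm of \<open>p\<close> and of \<open>X\<^sub>n\<close> to clear the coefficients at \<open>n + 1\<close> and \<open>n\<close>\<close>
    define z where "z = (\<lambda>i. y i - d * jq i - (y n - d * jq n) * basisR n i)"
    have "z i = 0" if "n < i" for i
      using that yc jq(2,3) d by (cases "i = Suc n") (auto simp: z_def carrierR_def basisR_def)
    then have zc: "z \<in> carrierR n" by (simp add: carrierR_def)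
    moreover have "z n = 0" by (simp add: z_def basisR_def)
    ultimately have "z \<in> mark_ideal p (int p) 0 n"
      using mark_cong_self[of 0 n p z] by (simp add: mark_ideal_def)
    then have "addR z (addR (mulR p (Suc n) (constR (Suc n) (y n - d * jq n)) (basisR n))
        (mulR p (Suc n) (constR (Suc n) d) jq)) \<in> P ! Suc n"
      by (intro ideal_R_addR[OF I] ideal_R_mulR[OF I] constR_carrier from_below x jq(1))
    then show "y \<in> P ! Suc n"
      using mulR_constR[OF p] jq(2) basisR_carrier_Suc by (simp add: addR_def z_def)
  qed
qed

lemma next_component:
  assumes p: "prime p" and P: "is_prime_TF p (Suc n) P" and q: "q = 0 \<or> prime q" and c: "c \<le> n"
    and pre: "\<And>k. k \<le> n \<Longrightarrow> P ! k = mark_ideal p q c k"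
  shows "P ! Suc n = mark_ideal p q c (Suc n) \<or> c = n \<and> P ! Suc n = mark_ideal p q (Suc n) (Suc n)"
proof -
  have TF: "is_TF_ideal p (Suc n) P" using P by (simp add: is_prime_TF_def)
  have I: "is_ideal_R p (Suc n) (P ! Suc n)" "mark_ideal p q c n \<subseteq> P ! Suc n"
    "jndR p n (Suc n) ` mark_ideal p q c n \<subseteq> P ! Suc n" "resR p (Suc n) n ` (P ! Suc n) \<subseteq> mark_ideal p q c n"
    using is_TF_ideal_SucD[OF TF] pre[of n] by auto
  consider "q = int p" | "q \<noteq> int p" "c < n" | "q \<noteq> int p" "c = n" using c by linarith
  then show ?thesis
  proof cases
    case 1
    then have "P ! Suc n = mark_ideal p q c (Suc n)"
      using next_component_over_p[OF p P] pre by (simp add: mark_ideal_p[of p c])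
    then show ?thesis by simp
  next
    case 2
    then have "P ! Suc n = mark_ideal p q c (Suc n)" using next_component_eq[OF p _ _ I] q by blast
    then show ?thesis by simp
  next
    case 3
    have "P ! Suc n = mark_ideal p q n (Suc n) \<or> P ! Suc n = mark_ideal p q (Suc n) (Suc n)"
    proof (cases "q = 0")
      case True
      have "P ! k = mark_ideal p 0 n k" if "k \<le> n" for k using pre[OF that] 3(2) True by simp
      from next_component_cases_zero[OF p P this] show ?thesis using True by simp
    next
      case False
      then show ?thesis using q next_component_cases_prime[OF p _ 3(1) I[unfolded 3(2)]] by simp
    qed
    then show ?thesis using 3(2) by blast
  qed
qed

lemma is_prime_TF_Suc_extends:
  assumes p: "prime p" and P: "is_prime_TF p (Suc n) P" and q: "q = 0 \<or> prime q"
    and c: "c \<le> n" and pre: "butlast P = mark_TF_ideal p q c n"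
  obtains c' where "c' \<le> Suc n" "P = mark_TF_ideal p q c' (Suc n)"
proof -
  have len: "length P = Suc (Suc n)" using P by (simp add: is_prime_TF_def is_TF_ideal_def)
  have Pk: "P ! k = mark_ideal p q c k" if "k \<le> n" for k
    using that pre len nth_butlast[of k P] by simp
  have "P \<noteq> []" using len by auto
  then have "P = butlast P @ [last P]" by simp
  also have "last P = P ! Suc n" using \<open>P \<noteq> []\<close> len by (simp add: last_conv_nth)
  finally have snoc: "P = butlast P @ [P ! Suc n]" .
  have extend: "P = mark_TF_ideal p q c' (Suc n)"
    if "P ! Suc n = mark_ideal p q c' (Suc n)" "mark_TF_ideal p q c' n = mark_TF_ideal p q c n" for c'
    using snoc pre that by (simp add: mark_TF_ideal_Suc)
  from next_component[OF p P q c Pk] show ?thesis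
  proof
    assume "P ! Suc n = mark_ideal p q c (Suc n)"
    then show ?thesis using extend[of c] that[of c] c by simp
  next
    assume "c = n \<and> P ! Suc n = mark_ideal p q (Suc n) (Suc n)"
    then have "P = mark_TF_ideal p q (Suc n) (Suc n)"
      using extend[of "Suc n"] by (simp add: mark_TF_ideal_cap)
    then show ?thesis by (rule that[rotated]) simp
  qed
qed

theorem is_prime_TF_iff:
  assumes p: "prime p"
  shows "is_prime_TF p n P \<longleftrightarrow> (\<exists>q c. (q = 0 \<or> prime q) \<and> c \<le> n \<and> P = mark_TF_ideal p q c n)"
proof
  show "is_prime_TF p n P" if "\<exists>q c. (q = 0 \<or> prime q) \<and> c \<le> n \<and> P = mark_TF_ideal p q c n"
    using that is_prime_TF_mark_TF_ideal[OF p] by blast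
  show "\<exists>q c. (q = 0 \<or> prime q) \<and> c \<le> n \<and> P = mark_TF_ideal p q c n" if "is_prime_TF p n P"
    using that
  proof (induction n arbitrary: P)
    case 0
    then obtain q where q: "q = 0 \<or> prime q" "P ! 0 = mark_ideal p q 0 0"
      using is_prime_TF_zero_level[OF p] by blast
    have "length P = 1" using 0 by (simp add: is_prime_TF_def is_TF_ideal_def)
    then have "P = mark_TF_ideal p q 0 0" using q(2) by (cases P) (auto simp: mark_TF_ideal_def)
    then show ?case using q(1) by blast
  next
    case (Suc n)
    then obtain q c where q: "q = 0 \<or> prime q" and c: "c \<le> n" and pre: "butlast P = mark_TF_ideal p q c n"
      using is_prime_TF_butlast by blast
    obtain c' where "c' \<le> Suc n" "P = mark_TF_ideal p q c' (Suc n)"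
      by (rule is_prime_TF_Suc_extends[OF p Suc.prems q c pre])
    then show ?case using q by blast
  qed
qed

section \<open>The operators \<open>\<L>\<close> and \<open>\<S>\<close>\<close>

lemma calL_mark_TF_ideal:
  assumes "c \<le> n"
  shows "calL p (mark_TF_ideal p q c n) = mark_TF_ideal p q c (Suc n)"
proof -
  have "opL p (Suc n) (mark_ideal p q c n) = mark_ideal p q c (Suc n)"
    using assms by (auto simp: opL_def mark_ideal_def mark_resR resR_carrier)
  then show ?thesis by (simp add: calL_def mark_TF_ideal_Suc mark_TF_ideal_def)
qed

lemma calL_pow_mark_TF_ideal: "c \<le> n \<Longrightarrow> (calL p ^^ i) (mark_TF_ideal p q c n) = mark_TF_ideal p q c (n + i)"
  by (induction i) (simp_all add: calL_mark_TF_ideal)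

lemma calS_mark_TF_ideal:
  assumes p: "prime p" and q: "q = 0 \<or> prime q \<and> q \<noteq> int p"
  shows "calS p (mark_TF_ideal p q n n) = mark_TF_ideal p q (Suc n) (Suc n)"
proof -
  let ?T = "mark_ideal p q n n"
  have T: "?T = mark_ideal p q (Suc n) n" by (simp add: mark_ideal_cap)
  have "opS p (Suc n) ?T = mark_ideal p q (Suc n) (Suc n)"
    unfolding opS_def gen_ideal_def
  proof (intro equalityI Inter_lower Inter_greatest)
    show "mark_ideal p q (Suc n) (Suc n)
      \<in> {J. is_ideal_R p (Suc n) J \<and> indR (Suc n - 1) (Suc n) ` ?T \<union> jndR p (Suc n - 1) (Suc n) ` ?T \<subseteq> J}"
      using T is_ideal_mark_ideal indR_mark_ideal jndR_mark_ideal[OF p] by (auto simp: indR_def)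
    fix J assume "J \<in> {J. is_ideal_R p (Suc n) J \<and> indR (Suc n - 1) (Suc n) ` ?T \<union> jndR p (Suc n - 1) (Suc n) ` ?T \<subseteq> J}"
    then show "mark_ideal p q (Suc n) (Suc n) \<subseteq> J"
      by (intro mark_ideal_Suc_subset[OF p q]) (auto simp: indR_def)
  qed
  then show ?thesis by (simp add: calS_def mark_TF_ideal_Suc mark_TF_ideal_def mark_ideal_cap)
qed

lemma calS_pow_mark_TF_ideal:
  assumes "prime p" "q = 0 \<or> prime q \<and> q \<noteq> int p"
  shows "(calS p ^^ j) (mark_TF_ideal p q 0 0) = mark_TF_ideal p q j j"
  by (induction j) (simp_all add: calS_mark_TF_ideal[OF assms])

lemma princ_eq_mark_TF_ideal: "princ x = mark_TF_ideal p x 0 0"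
  by (simp add: princ_def mark_TF_ideal_def mark_ideal_zero_level)

lemma zeroTF_eq_mark_TF_ideal:
  assumes "prime p"
  shows "zeroTF n = mark_TF_ideal p 0 n n"
  by (rule nth_equalityI) (simp_all add: zeroTF_def mark_ideal_zero_top[OF assms] del: replicate_Suc)

lemma mark_TF_ideal_strict:
  assumes p: "prime p" and q: "q = 0 \<or> prime q \<and> q \<noteq> int p" and cr: "c < r"
  shows "ideal_less (mark_TF_ideal p q (Suc c) r) (mark_TF_ideal p q c r)"
proof -
  have le: "ideal_le (mark_TF_ideal p q (Suc c) r) (mark_TF_ideal p q c r)"
    by (auto simp: ideal_le_def mark_ideal_def less_Suc_eq_le)
  \<comment> \<open>\<open>p\<^sup>r\<^sup>-\<^sup>c - X\<^sub>c\<close> has marks \<open>0\<close> up to level \<open>c\<close> and \<open>p\<^sup>r\<^sup>-\<^sup>c\<close> above\<close>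
  define w where "w = (\<lambda>i. int p ^ (r - c) * constR r 1 i - basisR c i)"
  have mark_w: "mark p r w t = int p ^ (r - c) - (if t \<le> c then int p ^ (r - c) else 0)" if "t \<le> r" for t
    using that cr by (simp add: w_def mark_diff mark_scale mark_constR mark_basisR)
  have "w \<in> carrierR r" using cr by (auto simp: w_def constR_def basisR_def carrierR_def)
  then have "w \<in> mark_ideal p q c r" using cr by (simp add: mark_ideal_def mark_w)
  moreover have "\<not> q dvd int p ^ (r - c)"
  proof
    assume d: "q dvd int p ^ (r - c)"
    show False
    proof (cases "q = 0")
      case True
      then show False using d prime_gt_0_nat[OF p] by simp
    next
      case False
      then have "prime q" "q \<noteq> int p" using q by auto
      then show False using d prime_dvd_power prime_not_dvd_prime[OF p] by blast
    qed
  qed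
  then have "\<not> q dvd mark p r w (Suc c)" using cr by (simp add: mark_w)
  then have "w \<notin> mark_ideal p q (Suc c) r" using cr by (auto simp: mark_ideal_def)
  ultimately have "mark_TF_ideal p q (Suc c) r ! r \<noteq> mark_TF_ideal p q c r ! r" by auto
  then have "mark_TF_ideal p q (Suc c) r \<noteq> mark_TF_ideal p q c r" by (rule contrapos_nn) simp
  then show ?thesis using le by (simp add: ideal_less_def)
qed

lemma mark_ideal_zero_level_inj:
  assumes "0 \<le> a" "0 \<le> b" "mark_ideal p a c 0 = mark_ideal p b c' 0"
  shows "a = b"
proof -
  have const_mem: "constR 0 u \<in> mark_ideal p v d 0 \<longleftrightarrow> v dvd u" for u v d
    using constR_carrier[of 0 u] by (simp add: mark_ideal_zero_level constR_def)
  have "b dvd a" "a dvd b" using const_mem[of a] const_mem[of b] assms(3) by (metis dvd_refl)+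
  then show ?thesis using assms(1,2) by (simp add: zdvd_antisym_nonneg)
qed

lemma Setcompr_le_cong:
  fixes f g :: "nat \<Rightarrow> 'a"
  assumes "\<And>i. i \<le> r \<Longrightarrow> f i = g i"
  shows "{f i | i. i \<le> r} = {g i | i. i \<le> r}"
  unfolding setcompr_eq_image by (rule image_cong) (simp_all add: assms)

lemma Setcompr_diff_reindex: "{f (r - i) | i. i \<le> (r::nat)} = {f c | c. c \<le> r}"
proof (intro equalityI subsetI)
  fix x assume "x \<in> {f c | c. c \<le> r}"
  then obtain c where "c \<le> r" "x = f c" by blast
  then have "x = f (r - (r - c))" "r - c \<le> r" by simp_all
  then show "x \<in> {f (r - i) | i. i \<le> r}" by blast
next
  fix x assume "x \<in> {f (r - i) | i. i \<le> r}"
  then obtain i where "x = f (r - i)" by blast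
  moreover have "r - i \<le> r" by simp
  ultimately show "x \<in> {f c | c. c \<le> r}" by blast
qed

lemma nth_0_mark_TF_ideal: "mark_TF_ideal p q c r ! 0 = mark_ideal p q 0 0"
  using mark_ideal_cap[of 0 c 0 p q] by simp

lemma prime_TF_ideals_over:
  assumes p: "prime p" and q: "q = 0 \<or> prime q"
  shows "{P. is_prime_TF p r P \<and> P ! 0 = mark_ideal p q 0 0} = {mark_TF_ideal p q c r | c. c \<le> r}"
proof (intro equalityI subsetI)
  fix P assume P: "P \<in> {P. is_prime_TF p r P \<and> P ! 0 = mark_ideal p q 0 0}"
  then obtain q' c where q': "q' = 0 \<or> prime q'" "c \<le> r" "P = mark_TF_ideal p q' c r"
    using is_prime_TF_iff[OF p] by blast
  have "mark_ideal p q' 0 0 = mark_ideal p q 0 0" using P q'(3) by (simp add: nth_0_mark_TF_ideal)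
  then have "q' = q" using q q' by (intro mark_ideal_zero_level_inj) (auto intro: prime_ge_0_int)
  then show "P \<in> {mark_TF_ideal p q c r | c. c \<le> r}" using q' by blast
next
  fix P assume "P \<in> {mark_TF_ideal p q c r | c. c \<le> r}"
  then show "P \<in> {P. is_prime_TF p r P \<and> P ! 0 = mark_ideal p q 0 0}"
    using is_prime_TF_mark_TF_ideal[OF p q] by (auto simp: nth_0_mark_TF_ideal)
qed

lemma calL_calS_princ:
  assumes "prime p" "prime q" "q \<noteq> p" "i \<le> r"
  shows "(calL p ^^ i) ((calS p ^^ (r - i)) (princ (int q))) = mark_TF_ideal p (int q) (r - i) r"
  using assms calS_pow_mark_TF_ideal[of p "int q" "r - i"] calL_pow_mark_TF_ideal[where c="r - i" and n="r - i" and i=i and p=p and q="int q"]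
  by (simp add: princ_eq_mark_TF_ideal[of _ p])

lemma calL_zeroTF:
  assumes "prime p" "i \<le> r"
  shows "(calL p ^^ i) (zeroTF (r - i)) = mark_TF_ideal p 0 (r - i) r"
  using assms calL_pow_mark_TF_ideal[where c="r - i" and n="r - i" and i=i and p=p and q=0] by (simp add: zeroTF_eq_mark_TF_ideal)

lemma calL_princ_p: "(calL p ^^ r) (princ (int p)) = mark_TF_ideal p (int p) 0 r"
  using calL_pow_mark_TF_ideal[where c=0 and n=0 and i=r and p=p and q="int p"] by (simp add: princ_eq_mark_TF_ideal[of _ p])

lemma prime_TF_ideals_over_prime:
  assumes "prime p" "prime q" "q \<noteq> p"
  shows "{P. is_prime_TF p r P \<and> P ! 0 = princ (int q) ! 0}
    = {(calL p ^^ i) ((calS p ^^ (r - i)) (princ (int q))) | i. i \<le> r}"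
  using assms prime_TF_ideals_over[of p "int q" r] Setcompr_diff_reindex[of "\<lambda>c. mark_TF_ideal p (int q) c r" r]
    Setcompr_le_cong[OF calL_calS_princ[OF assms]]
  by (simp add: princ_eq_mark_TF_ideal[of _ p])

lemma prime_TF_ideals_over_p:
  assumes "prime p"
  shows "{P. is_prime_TF p r P \<and> P ! 0 = princ (int p) ! 0} = {(calL p ^^ r) (princ (int p))}"
proof -
  have "{mark_TF_ideal p (int p) c r | c. c \<le> r} = {mark_TF_ideal p (int p) 0 r}"
    using mark_TF_ideal_p[of p _ r] by auto
  then show ?thesis
    using prime_TF_ideals_over[of p "int p" r] assms
    by (simp add: princ_eq_mark_TF_ideal[of _ p] calL_pow_mark_TF_ideal)
qed

lemma prime_TF_ideals_over_zero:
  assumes "prime p"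
  shows "{P. is_prime_TF p r P \<and> P ! 0 = {zeroR}} = {(calL p ^^ i) (zeroTF (r - i)) | i. i \<le> r}"
  using prime_TF_ideals_over[of p 0 r] assms Setcompr_diff_reindex[of "\<lambda>c. mark_TF_ideal p 0 c r" r]
    Setcompr_le_cong[OF calL_zeroTF[OF assms]]
  by (simp add: mark_ideal_zero_top)

lemma zero_or_prime_int_cases:
  fixes q :: int and p :: nat
  assumes "q = 0 \<or> prime q"
  obtains "q = 0" | "q = int p" | q' where "prime q'" "q' \<noteq> p" "q = int q'"
proof (cases "q = 0")
  case False
  define q' where "q' = nat q"
  have q': "q = int q'" "prime q'" using assms False prime_ge_0_int[of q] by (auto simp: q'_def)
  then show ?thesis using that(2,3) by (cases "q' = p") auto
qed (use that in blast)

lemma SpecOmega_eq: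
  assumes p: "prime p"
  shows "SpecOmega p r = {(calL p ^^ r) (princ (int p))}
        \<union> {(calL p ^^ i) (zeroTF (r - i)) | i. i \<le> r}
        \<union> {(calL p ^^ i) ((calS p ^^ (r - i)) (princ (int q))) | i q. i \<le> r \<and> prime q \<and> q \<noteq> p}"
    (is "_ = ?B \<union> ?Z \<union> ?Q")
proof (intro equalityI subsetI)
  fix P assume "P \<in> SpecOmega p r"
  then obtain q c where q: "q = 0 \<or> prime q" and c: "c \<le> r" and P: "P = mark_TF_ideal p q c r"
    using is_prime_TF_iff[OF p] by (auto simp: SpecOmega_def)
  have i: "r - c \<le> r" "r - (r - c) = c" using c by auto
  from q show "P \<in> ?B \<union> ?Z \<union> ?Q"
  proof (cases rule: zero_or_prime_int_cases[where q=q and p=p])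
    case 1
    then have "P = (calL p ^^ (r - c)) (zeroTF (r - (r - c)))" using P calL_zeroTF[OF p i(1)] i(2) by simp
    then show ?thesis using i(1) by blast
  next
    case 2
    then show ?thesis using P calL_princ_p mark_TF_ideal_p[of p c r] by simp
  next
    case (3 q')
    then have "P = (calL p ^^ (r - c)) ((calS p ^^ (r - (r - c))) (princ (int q')))"
      using P calL_calS_princ[OF p 3(1,2) i(1)] i(2) by simp
    then show ?thesis using i(1) 3(1,2) by blast
  qed
next
  fix P assume "P \<in> ?B \<union> ?Z \<union> ?Q"
  then consider "P = (calL p ^^ r) (princ (int p))"
    | i where "i \<le> r" "P = (calL p ^^ i) (zeroTF (r - i))"
    | i q where "i \<le> r" "prime q" "q \<noteq> p" "P = (calL p ^^ i) ((calS p ^^ (r - i)) (princ (int q)))"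
    by blast
  then have "\<exists>q c. (q = 0 \<or> prime q) \<and> c \<le> r \<and> P = mark_TF_ideal p q c r"
  proof cases
    case 1
    then show ?thesis using p by (intro exI[of _ "int p"] exI[of _ 0]) (simp add: calL_princ_p)
  next
    case (2 i)
    then show ?thesis by (intro exI[of _ 0] exI[of _ "r - i"]) (simp add: calL_zeroTF[OF p])
  next
    case (3 i q)
    then show ?thesis by (intro exI[of _ "int q"] exI[of _ "r - i"]) (simp add: calL_calS_princ[OF p])
  qed
  then show "P \<in> SpecOmega p r" using is_prime_TF_iff[OF p] by (simp add: SpecOmega_def)
qed

lemma prime_TF_chain_over_prime:
  assumes p: "prime p" and q: "prime q" "q \<noteq> p" and i: "i < r"
  shows "ideal_less ((calL p ^^ i) ((calS p ^^ (r - i)) (princ (int q))))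
    ((calL p ^^ Suc i) ((calS p ^^ (r - Suc i)) (princ (int q))))"
proof -
  have "r - i = Suc (r - Suc i)" using i by simp
  then have "ideal_less (mark_TF_ideal p (int q) (r - i) r) (mark_TF_ideal p (int q) (r - Suc i) r)"
    using q i mark_TF_ideal_strict[OF p, of "int q" "r - Suc i" r] by simp
  then show ?thesis
    by (simp only: calL_calS_princ[OF p q less_imp_le[OF i]] calL_calS_princ[OF p q Suc_leI[OF i]])
qed

lemma prime_TF_chain_over_zero:
  assumes p: "prime p" and i: "i < r"
  shows "ideal_less ((calL p ^^ i) (zeroTF (r - i))) ((calL p ^^ Suc i) (zeroTF (r - Suc i)))"
proof -
  have "r - i = Suc (r - Suc i)" using i by simp
  then have "ideal_less (mark_TF_ideal p 0 (r - i) r) (mark_TF_ideal p 0 (r - Suc i) r)"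
    using i mark_TF_ideal_strict[OF p, of 0 "r - Suc i" r] by simp
  then show ?thesis
    by (simp only: calL_zeroTF[OF p less_imp_le[OF i]] calL_zeroTF[OF p Suc_leI[OF i]])
qed

theorem mainTheorem1:
  fixes p r :: nat
  assumes "prime p"
  shows
    "(\<forall>q::nat. prime q \<longrightarrow> q \<noteq> p \<longrightarrow>
        {P. is_prime_TF p r P \<and> P ! 0 = princ (int q) ! 0}
          = {(calL p ^^ i) ((calS p ^^ (r - i)) (princ (int q))) | i. i \<le> r}
      \<and> (\<forall>i<r. ideal_less ((calL p ^^ i) ((calS p ^^ (r - i)) (princ (int q))))
                           ((calL p ^^ Suc i) ((calS p ^^ (r - Suc i)) (princ (int q))))))
   \<and> {P. is_prime_TF p r P \<and> P ! 0 = princ (int p) ! 0} = {(calL p ^^ r) (princ (int p))}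
   \<and> {P. is_prime_TF p r P \<and> P ! 0 = {zeroR}} = {(calL p ^^ i) (zeroTF (r - i)) | i. i \<le> r}
   \<and> (\<forall>i<r. ideal_less ((calL p ^^ i) (zeroTF (r - i))) ((calL p ^^ Suc i) (zeroTF (r - Suc i))))
   \<and> SpecOmega p r = {(calL p ^^ r) (princ (int p))}
        \<union> {(calL p ^^ i) (zeroTF (r - i)) | i. i \<le> r}
        \<union> {(calL p ^^ i) ((calS p ^^ (r - i)) (princ (int q))) | i q. i \<le> r \<and> prime q \<and> q \<noteq> p}"
  by (simp add: prime_TF_ideals_over_prime[OF assms] prime_TF_ideals_over_p[OF assms]
      prime_TF_ideals_over_zero[OF assms] SpecOmega_eq[OF assms]
      prime_TF_chain_over_prime[OF assms] prime_TF_chain_over_zero[OF assms] del: funpow.simps)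

end
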